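(* Assume the vertex degrees of $G$ are uniformly bounded, $q:=\max_vq(v)$, and let $\theta\in(0,1)$. For every $n\ge1$ the operator norm of $\mathcal T^n$ on $\mathrm{Lip}_\theta$ equals $R_n$, both when $\mathrm{Lip}_\theta$ carries $\|\cdot\|_\theta$ and when it carries $\|\cdot\|_\infty$. Consequently the spectral radius of $\mathcal T$ on $(\mathrm{Lip}_\theta,\|\cdot\|_\theta)$ is $\rho=\lim_{n\to\infty}R_n^{1/n}\le q$. Moreover, for every $\varepsilon>0$ there is $N$ such that for all $n\ge N$ and all $f\in\mathrm{Lip}_\theta$, $$\|\mathcal T^nf\|_\theta\le(\rho+\varepsilon)^n\big(\theta^n\,\mathrm L_1(f)+\|f\|_\infty\big).$$
   Context: $G$ is a connected, locally finite graph (no loops, no multiple edges, every vertex of degree $\ge2$); $\deg v=1+q(v)$. $E$ oriented edges, $\iota,\tau$, $\bar e$ as usual; turn $e\rightsquigarrow e'$ iff $\tau(e)=\iota(e')$, $e'\ne\bar e$. $P$ = infinite paths $(e_1,e_2,\dots)$ with $e_i\rightsquigarrow e_{i+1}$; $(\mathcal Tf)(e_1,e_2,\dots)=\sum_{e_0\rightsquigarrow e_1}f(e_0,e_1,\dots)$. For $e\in E$ and $n\ge1$, $N_n(e)$ is the number of paths $(e_{-n},\dots,e_{-1},e_0)$ with $e_{i}\rightsquigarrow e_{i+1}$ and $e_0=e$; $R_n:=\sup_{e\in E}N_n(e)$. $d_\theta(p,p')=\theta^{k-1}$, $k=\min\{i:e_i\ne e'_i\}$; $\mathrm{Lip}_\theta$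 = bounded $f:P\to\mathbb C$ uniformly $d_\theta$-Lipschitz on each island $\{p:\iota(e_1)=v\}$; $\mathrm L_1(f)$ = optimal Lipschitz constant over pairs of paths with the same first edge; $\|f\|_\theta=\mathrm L_1(f)+\|f\|_\infty$. *)

theory Defs
  imports "HOL-Analysis.Analysis"
begin

text \<open>The graph G has vertex set the whole type 'v and (undirected) adjacency relation adj.
Oriented edges are pairs (u,w) with adj u w; iota = fst, tau = snd, reverse of (u,w) is (w,u).
An infinite path (e_1,e_2,...) is a map p :: nat => edge, with e_(i+1) = p i.\<close>

type_synonym 'v edge = "'v \<times> 'v"
type_synonym 'v path = "nat \<Rightarrow> 'v \<times> 'v"

definition graph_ok :: "('v \<Rightarrow> 'v \<Rightarrow> bool) \<Rightarrow> bool" where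
  "graph_ok adj \<longleftrightarrow>
     (\<forall>u w. adj u w \<longrightarrow> adj w u) \<and> (\<forall>v. \<not> adj v v) \<and>
     (\<forall>v. finite {w. adj v w}) \<and> (\<forall>u w. adj\<^sup>*\<^sup>* u w)"

definition deg :: "('v \<Rightarrow> 'v \<Rightarrow> bool) \<Rightarrow> 'v \<Rightarrow> nat" where
  "deg adj v = card {w. adj v w}"

definition qmax :: "('v \<Rightarrow> 'v \<Rightarrow> bool) \<Rightarrow> nat" where
  "qmax adj = Max (range (\<lambda>v. deg adj v - 1))"

definition edges :: "('v \<Rightarrow> 'v \<Rightarrow> bool) \<Rightarrow> 'v edge set" where
  "edges adj = {(u, w). adj u w}"

definition turn :: "'v edge \<Rightarrow> 'v edge \<Rightarrow> bool" where
  "turn e e' \<longleftrightarrow> snd e = fst e' \<and> e' \<noteq> (snd e, fst e)"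

definition paths :: "('v \<Rightarrow> 'v \<Rightarrow> bool) \<Rightarrow> 'v path set" where
  "paths adj = {p. (\<forall>i. p i \<in> edges adj) \<and> (\<forall>i. turn (p i) (p (Suc i)))}"

definition Tr :: "('v \<Rightarrow> 'v \<Rightarrow> bool) \<Rightarrow> ('v path \<Rightarrow> complex) \<Rightarrow> ('v path \<Rightarrow> complex)" where
  "Tr adj f = (\<lambda>p. \<Sum>e0 \<in> {e0 \<in> edges adj. turn e0 (p 0)}. f (case_nat e0 p))"

text \<open>N_n(e): number of paths (e_-n,...,e_0) with e_0 = e, encoded as lists of length n+1.\<close>
definition Ncount :: "('v \<Rightarrow> 'v \<Rightarrow> bool) \<Rightarrow> nat \<Rightarrow> 'v edge \<Rightarrow> nat" where
  "Ncount adj n e = card {xs. length xs = Suc n \<and> last xs = e \<and> set xs \<subseteq> edges adj \<and>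
                              (\<forall>i<n. turn (xs ! i) (xs ! Suc i))}"

definition Rn :: "('v \<Rightarrow> 'v \<Rightarrow> bool) \<Rightarrow> nat \<Rightarrow> nat" where
  "Rn adj n = (SUP e \<in> edges adj. Ncount adj n e)"

text \<open>d_theta(p,p') = theta^(k-1), k the first (1-based) index where the edges differ;
with 0-based indexing this is theta^(LEAST i. p i \<noteq> p' i).\<close>
definition dtheta :: "real \<Rightarrow> 'v path \<Rightarrow> 'v path \<Rightarrow> real" where
  "dtheta \<theta> p p' = (if p = p' then 0 else \<theta> ^ (LEAST i. p i \<noteq> p' i))"

definition Lip :: "('v \<Rightarrow> 'v \<Rightarrow> bool) \<Rightarrow> real \<Rightarrow> ('v path \<Rightarrow> complex) set" where
  "Lip adj \<theta> = {f. (\<exists>B. \<forall>p \<in> paths adj. norm (f p) \<le> B) \<and>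
       (\<exists>C. \<forall>p \<in> paths adj. \<forall>p' \<in> paths adj. fst (p 0) = fst (p' 0) \<longrightarrow>
              norm (f p - f p') \<le> C * dtheta \<theta> p p')}"

definition supnorm :: "('v \<Rightarrow> 'v \<Rightarrow> bool) \<Rightarrow> ('v path \<Rightarrow> complex) \<Rightarrow> real" where
  "supnorm adj f = (SUP p \<in> paths adj. norm (f p))"

definition L1 :: "('v \<Rightarrow> 'v \<Rightarrow> bool) \<Rightarrow> real \<Rightarrow> ('v path \<Rightarrow> complex) \<Rightarrow> real" where
  "L1 adj \<theta> f = Inf {C. 0 \<le> C \<and> (\<forall>p \<in> paths adj. \<forall>p' \<in> paths adj. p 0 = p' 0 \<longrightarrow>
              norm (f p - f p') \<le> C * dtheta \<theta> p p')}"

definition thnorm :: "('v \<Rightarrow> 'v \<Rightarrow> bool) \<Rightarrow> real \<Rightarrow> ('v path \<Rightarrow> complex) \<Rightarrow> real" where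
  "thnorm adj \<theta> f = L1 adj \<theta> f + supnorm adj f"

text \<open>Operator norm of A on the function space X with (semi)norm nrm
(functions are identified when they agree on paths, i.e. when nrm f = 0).\<close>
definition opnorm_on :: "('a \<Rightarrow> complex) set \<Rightarrow> (('a \<Rightarrow> complex) \<Rightarrow> real) \<Rightarrow>
     (('a \<Rightarrow> complex) \<Rightarrow> ('a \<Rightarrow> complex)) \<Rightarrow> real" where
  "opnorm_on X nrm A = Sup {nrm (A f) / nrm f | f. f \<in> X \<and> nrm f \<noteq> 0}"

text \<open>Spectrum of T on Lip_theta (elements identified when equal on paths):
lambda is in the spectrum iff lambda - T is not bijective on Lip_theta
(by the bounded inverse theorem, bijectivity on the Banach space suffices).\<close>
definition spectrum_Lip :: "('v \<Rightarrow> 'v \<Rightarrow> bool) \<Rightarrow> real \<Rightarrow> complex set" where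
  "spectrum_Lip adj \<theta> = {z. \<not> (
      (\<forall>f \<in> Lip adj \<theta>. (\<forall>p \<in> paths adj. z * f p - Tr adj f p = 0) \<longrightarrow> (\<forall>p \<in> paths adj. f p = 0)) \<and>
      (\<forall>g \<in> Lip adj \<theta>. \<exists>f \<in> Lip adj \<theta>. \<forall>p \<in> paths adj. z * f p - Tr adj f p = g p))}"

definition spectral_radius_Lip :: "('v \<Rightarrow> 'v \<Rightarrow> bool) \<Rightarrow> real \<Rightarrow> real" where
  "spectral_radius_Lip adj \<theta> = Sup (norm ` spectrum_Lip adj \<theta>)"

end

theory Submission
  imports Defs
begin

(*
  (T^n f)(p) sums f over the N_n(p_0) backward extensions of p by n edges, and the extensions of
  two paths with the same first edge by the same n edges first differ n places later than the
  paths do. Hence sup |T^n f| <= R_n sup |f| and L_1(T^n f) <= R_n theta^n L_1(f), with equality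
  for f = 1, which gives both operator norms. R_n is submultiplicative, so R_n^(1/n) -> rho by
  Fekete's lemma, and for |z| > rho the Neumann series sum_n T^n / z^(n+1) inverts z - T.
  Conversely, were rho - T bijective on the complete space Lip_theta, its inverse would be bounded
  (open mapping theorem, via Baire). The resolvent (l - A)^-1 of the edge operator
  A u (e) = sum_{e0 ~> e} u(e0) is a positive Neumann series for l > rho, and the bounded inverse
  bounds it uniformly for l close to rho. Its Taylor expansion around such an l then yields a
  bounded w >= 0 with (lambda - A) w = 1 for some lambda < rho, which forces
  N_n(e) <= lambda^(n+1) w(e), i.e. R_n = O(lambda^n), contradicting R_n^(1/n) -> rho.
*)

lemma subadditive_mult_add_le:
  fixes a :: "nat \<Rightarrow> real"
  assumes subadd: "\<And>m n. a (m + n) \<le> a m + a n"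
  shows "a (k * m + r) \<le> real k * a m + a r"
proof (induction k)
  case 0
  thus ?case by simp
next
  case (Suc k)
  have "a (Suc k * m + r) = a (m + (k * m + r))"
    by (simp add: algebra_simps)
  also have "\<dots> \<le> a m + a (k * m + r)"
    by (rule subadd)
  also have "\<dots> \<le> a m + (real k * a m + a r)"
    using Suc.IH by simp
  finally show ?case
    by (simp add: algebra_simps)
qed

lemma subadditive_div_le:
  fixes a :: "nat \<Rightarrow> real"
  assumes nonneg: "\<And>n. 0 \<le> a n" and subadd: "\<And>m n. a (m + n) \<le> a m + a n"
    and "0 < m" "0 < n"
  shows "a n / real n \<le> a m / real m + Max (a ` {..<m}) / real n"
proof -
  have "a n = a (n div m * m + n mod m)"
    by simp
  also have "\<dots> \<le> real (n div m) * a m + a (n mod m)"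
    by (rule subadditive_mult_add_le[OF subadd])
  also have "\<dots> \<le> (real n / real m) * a m + Max (a ` {..<m})"
    using assms by (intro add_mono mult_right_mono of_nat_div_le_of_nat Max_ge) auto
  finally show ?thesis
    using assms by (simp add: field_simps)
qed

lemma summable_geometric_bound:
  fixes u :: "nat \<Rightarrow> real"
  assumes "\<And>k. 0 \<le> u k" "\<And>k. u k \<le> B * C ^ k" and "0 \<le> C" "0 < x" "C * x \<le> 1/2"
  shows "summable (\<lambda>k. x ^ k * u k)" and "(\<Sum>k. x ^ k * u k) \<le> 2 * B"
proof -
  have "0 \<le> B"
    using assms(1,2)[of 0] by simp
  have term_le: "norm (x ^ k * u k) \<le> B * (1/2) ^ k" for k
  proof -
    have "norm (x ^ k * u k) \<le> x ^ k * (B * C ^ k)"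
      using assms(1,2,4) by (simp add: mult_left_mono)
    also have "\<dots> = B * (C * x) ^ k"
      by (simp add: power_mult_distrib mult_ac)
    also have "\<dots> \<le> B * (1/2) ^ k"
      using assms(3-5) \<open>0 \<le> B\<close> by (intro mult_left_mono power_mono) auto
    finally show ?thesis .
  qed
  have "summable (\<lambda>k. B * (1/2::real) ^ k)"
    by (intro summable_mult summable_geometric) simp
  thus "summable (\<lambda>k. x ^ k * u k)"
    using term_le by (rule summable_comparison_test')
  have "norm (\<Sum>k. x ^ k * u k) \<le> (\<Sum>k. B * (1/2) ^ k)"
    using term_le \<open>summable (\<lambda>k. B * (1/2::real) ^ k)\<close> by (rule norm_suminf_le)
  also have "\<dots> = 2 * B"
    using suminf_mult[OF summable_geometric[of "1/2::real"], of B] suminf_geometric[of "1/2::real"] by simp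
  finally show "(\<Sum>k. x ^ k * u k) \<le> 2 * B"
    by simp
qed

lemma fekete_subadditive:
  fixes a :: "nat \<Rightarrow> real"
  assumes nonneg: "\<And>n. 0 \<le> a n" and subadd: "\<And>m n. a (m + n) \<le> a m + a n"
  shows "convergent (\<lambda>n. a n / real n)"
proof -
  define S where "S = (\<lambda>n. a n / real n) ` {1..}"
  define L where "L = Inf S"
  have "S \<noteq> {}"
    unfolding S_def by auto
  have "bdd_below S"
    unfolding S_def using nonneg by (intro bdd_belowI[of _ 0]) auto
  have L_le: "L \<le> a n / real n" if "1 \<le> n" for n
    unfolding L_def using that \<open>bdd_below S\<close> unfolding S_def by (intro cInf_lower) auto
  have "\<exists>N. \<forall>n\<ge>N. norm (a n / real n - L) < r" if r: "0 < r" for r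
  proof -
    obtain m where m: "1 \<le> m" "a m / real m < L + r / 2"
      using cInf_less_iff[OF \<open>S \<noteq> {}\<close> \<open>bdd_below S\<close>, of "L + r / 2"] r
      unfolding S_def L_def by auto
    define C where "C = Max (a ` {..<m})"
    obtain N :: nat where N: "2 * C / r < real N"
      using reals_Archimedean2 by blast
    have "norm (a n / real n - L) < r" if n: "max N 1 \<le> n" for n
    proof -
      have n_pos: "0 < real n"
        using n by simp
      have "a n / real n \<le> a m / real m + C / real n"
        unfolding C_def using m n by (intro subadditive_div_le nonneg subadd) auto
      moreover have "C / real n < r / 2"
      proof -
        have "2 * C / r < real n"
          using N n by (meson max.boundedE of_nat_le_iff order_less_le_trans)
        hence "2 * C < r * real n"
          using r by (simp add: pos_divide_less_eq mult.commute)
        thus ?thesis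
          using n_pos by (simp add: field_simps)
      qed
      ultimately have "a n / real n < L + r"
        using m by linarith
      thus ?thesis
        using L_le[of n] n by simp
    qed
    thus ?thesis by blast
  qed
  thus ?thesis
    unfolding convergent_def LIMSEQ_iff by blast
qed

lemma opnorm_on_eqI:
  assumes nonneg: "\<And>f. f \<in> X \<Longrightarrow> 0 \<le> nrm f"
    and bound: "\<And>f. f \<in> X \<Longrightarrow> nrm (A f) \<le> c * nrm f"
    and attained: "g \<in> X" "nrm g \<noteq> 0" "nrm (A g) = c * nrm g"
  shows "opnorm_on X nrm A = c"
  unfolding opnorm_on_def
proof (rule cSup_eq_maximum)
  show "c \<in> {nrm (A f) / nrm f |f. f \<in> X \<and> nrm f \<noteq> 0}"
    using attained by force
next
  fix x assume "x \<in> {nrm (A f) / nrm f |f. f \<in> X \<and> nrm f \<noteq> 0}"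
  then obtain f where f: "f \<in> X" "nrm f \<noteq> 0" and x: "x = nrm (A f) / nrm f"
    by blast
  have "0 < nrm f"
    using f nonneg by force
  thus "x \<le> c"
    unfolding x using bound[OF f(1)] by (simp add: divide_le_eq)
qed

section \<open>Counting non-backtracking walks\<close>

locale bounded_degree_graph =
  fixes adj :: "'v \<Rightarrow> 'v \<Rightarrow> bool"
  assumes graph_ok: "graph_ok adj"
    and deg_ge_2: "\<And>v. 2 \<le> deg adj v"
    and deg_bounded: "\<exists>D. \<forall>v. deg adj v \<le> D"
begin

lemma adj_sym: "adj u w \<Longrightarrow> adj w u"
  using graph_ok unfolding graph_ok_def by blast

lemma finite_neighbours: "finite {w. adj v w}"
  using graph_ok unfolding graph_ok_def by blast

lemma other_neighbour_exists: "\<exists>x. adj v x \<and> x \<noteq> w"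
proof -
  have "2 \<le> card {w. adj v w}"
    using deg_ge_2 unfolding deg_def by blast
  hence "\<not> {w. adj v w} \<subseteq> {w}"
    using card_mono[of "{w}" "{w. adj v w}"] by auto
  thus ?thesis by auto
qed

definition preds :: "'v edge \<Rightarrow> 'v edge set" where
  "preds e = {e0 \<in> edges adj. turn e0 e}"

lemma preds_subset_edges: "preds e \<subseteq> edges adj"
  unfolding preds_def by auto

lemma preds_eq_image: "preds (u, w) = (\<lambda>x. (x, u)) ` ({x. adj u x} - {w})"
  unfolding preds_def edges_def turn_def
  by (auto intro: adj_sym) (metis (mono_tags) Diff_iff image_eqI mem_Collect_eq singletonD adj_sym)

lemma finite_preds: "finite (preds e)"
  using preds_eq_image[of "fst e" "snd e"] finite_neighbours by simp

lemma preds_nonempty: "e \<in> edges adj \<Longrightarrow> preds e \<noteq> {}"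
  using preds_eq_image[of "fst e" "snd e"] other_neighbour_exists[of "fst e" "snd e"] by auto

lemma finite_range_deg: "finite (range (\<lambda>v. deg adj v - 1))"
proof -
  obtain D where "\<forall>v. deg adj v \<le> D"
    using deg_bounded by blast
  hence "range (\<lambda>v. deg adj v - 1) \<subseteq> {..D}"
    by (auto intro: le_trans[OF diff_le_self])
  thus ?thesis
    using finite_subset by blast
qed

lemma card_preds_le_qmax:
  assumes "e \<in> edges adj"
  shows "card (preds e) \<le> qmax adj"
proof -
  obtain u w where e: "e = (u, w)" by fastforce
  have "w \<in> {x. adj u x}"
    using assms unfolding e edges_def by auto
  have "card (preds e) \<le> card ({x. adj u x} - {w})"
    unfolding e preds_eq_image by (rule card_image_le) (simp add: finite_neighbours)
  also have "\<dots> = deg adj u - 1"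
    unfolding deg_def using \<open>w \<in> {x. adj u x}\<close> by (simp add: finite_neighbours)
  also have "\<dots> \<le> qmax adj"
    unfolding qmax_def using finite_range_deg by (intro Max_ge) auto
  finally show ?thesis .
qed

lemma edges_nonempty: "edges adj \<noteq> {}"
  using other_neighbour_exists[of undefined undefined] unfolding edges_def by auto

lemma path_through_edge:
  assumes "e \<in> edges adj"
  obtains p where "p \<in> paths adj" and "p 0 = e"
proof -
  have succ_exists: "\<exists>e'. e' \<in> edges adj \<and> turn e e'" for e
    using other_neighbour_exists[of "snd e" "fst e"]
    unfolding edges_def turn_def by auto
  define succ where "succ e = (SOME e'. e' \<in> edges adj \<and> turn e e')" for e
  have succ: "succ e \<in> edges adj \<and> turn e (succ e)" for e
    unfolding succ_def using succ_exists by (rule someI_ex)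
  have "(succ ^^ i) e \<in> edges adj" for i
    by (induction i) (auto simp: assms succ)
  hence "(\<lambda>i. (succ ^^ i) e) \<in> paths adj"
    unfolding paths_def by (auto simp: succ)
  thus ?thesis
    using that by simp
qed

lemma paths_nonempty: "paths adj \<noteq> {}"
  using edges_nonempty path_through_edge by blast

lemma paths_edge: "p \<in> paths adj \<Longrightarrow> p i \<in> edges adj"
  unfolding paths_def by auto

lemma case_nat_in_paths: "p \<in> paths adj \<Longrightarrow> e0 \<in> preds (p 0) \<Longrightarrow> case_nat e0 p \<in> paths adj"
  unfolding paths_def preds_def by (auto split: nat.split)

lemma Tr_eq_sum_preds: "Tr adj f p = (\<Sum>e0\<in>preds (p 0). f (case_nat e0 p))"
  unfolding Tr_def preds_def by simp

definition backward_walks :: "nat \<Rightarrow> 'v edge \<Rightarrow> 'v edge list set" where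
  "backward_walks n e = {xs. length xs = Suc n \<and> last xs = e \<and> set xs \<subseteq> edges adj \<and>
                            (\<forall>i<n. turn (xs ! i) (xs ! Suc i))}"

lemma Ncount_eq_card: "Ncount adj n e = card (backward_walks n e)"
  unfolding Ncount_def backward_walks_def ..

lemma backward_walks_0: "e \<in> edges adj \<Longrightarrow> backward_walks 0 e = {[e]}"
  unfolding backward_walks_def by (auto simp: length_Suc_conv)

lemma backward_walks_Suc:
  assumes "e \<in> edges adj"
  shows "backward_walks (Suc n) e = (\<Union>e0\<in>preds e. (\<lambda>ys. ys @ [e]) ` backward_walks n e0)"
proof (intro equalityI subsetI)
  fix xs assume "xs \<in> backward_walks (Suc n) e"
  then have len: "length xs = Suc (Suc n)" and l: "last xs = e" and s: "set xs \<subseteq> edges adj"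
    and t: "\<forall>i<Suc n. turn (xs!i) (xs!Suc i)"
    unfolding backward_walks_def by auto
  define ys where "ys = butlast xs"
  have xs: "xs = ys @ [e]"
    using len l unfolding ys_def by (metis append_butlast_last_id list.size(3) nat.distinct(1))
  have lys: "length ys = Suc n"
    using len xs by simp
  have nth: "ys ! i = xs ! i" if "i < Suc n" for i
    using that by (simp add: xs nth_append lys)
  have "last ys = xs ! n"
    using lys nth[of n] by (metis diff_Suc_1 last_conv_nth list.size(3) nat.distinct(1) lessI)
  moreover have "xs ! Suc n = e"
    using xs lys by (simp add: nth_append)
  moreover have "xs ! n \<in> set xs"
    using len by (intro nth_mem) simp
  ultimately have "last ys \<in> preds e"
    unfolding preds_def using t s by auto
  moreover have "ys \<in> backward_walks n (last ys)"
    unfolding backward_walks_def using lys s t nth xs by auto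
  ultimately show "xs \<in> (\<Union>e0\<in>preds e. (\<lambda>ys. ys @ [e]) ` backward_walks n e0)"
    using xs by blast
next
  fix xs assume "xs \<in> (\<Union>e0\<in>preds e. (\<lambda>ys. ys @ [e]) ` backward_walks n e0)"
  then obtain e0 ys where e0: "e0 \<in> preds e" and ys: "ys \<in> backward_walks n e0"
    and xs: "xs = ys @ [e]"
    by auto
  have lys: "length ys = Suc n" and ly: "last ys = e0" and sy: "set ys \<subseteq> edges adj"
    and ty: "\<forall>i<n. turn (ys!i) (ys!Suc i)"
    using ys unfolding backward_walks_def by auto
  have yn: "ys ! n = e0"
    using ly lys by (metis diff_Suc_1 last_conv_nth list.size(3) nat.distinct(1))
  have "turn (xs!i) (xs!Suc i)" if "i < Suc n" for i
  proof (cases "i < n")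
    case True
    thus ?thesis using ty lys by (simp add: xs nth_append)
  next
    case False
    hence "i = n" using that by simp
    thus ?thesis using yn e0 lys unfolding preds_def by (simp add: xs nth_append)
  qed
  thus "xs \<in> backward_walks (Suc n) e"
    unfolding backward_walks_def using lys sy assms xs by auto
qed

lemma finite_backward_walks: "e \<in> edges adj \<Longrightarrow> finite (backward_walks n e)"
proof (induction n arbitrary: e)
  case 0
  thus ?case by (simp add: backward_walks_0)
next
  case (Suc n)
  have "finite (backward_walks n e0)" if "e0 \<in> preds e" for e0
    using that preds_subset_edges Suc.IH by blast
  thus ?case
    unfolding backward_walks_Suc[OF Suc.prems] by (intro finite_UN_I finite_preds finite_imageI)
qed

lemma Ncount_0: "e \<in> edges adj \<Longrightarrow> Ncount adj 0 e = 1"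
  by (simp add: Ncount_eq_card backward_walks_0)

lemma Ncount_Suc:
  assumes "e \<in> edges adj"
  shows "Ncount adj (Suc n) e = (\<Sum>e0\<in>preds e. Ncount adj n e0)"
proof -
  have fin: "finite (backward_walks n e0)" if "e0 \<in> preds e" for e0
    using that preds_subset_edges finite_backward_walks by blast
  have "Ncount adj (Suc n) e = card (\<Union>e0\<in>preds e. (\<lambda>ys. ys @ [e]) ` backward_walks n e0)"
    by (simp add: Ncount_eq_card backward_walks_Suc assms)
  also have "\<dots> = (\<Sum>e0\<in>preds e. card ((\<lambda>ys. ys @ [e]) ` backward_walks n e0))"
    using fin by (intro card_UN_disjoint finite_preds) (auto simp: backward_walks_def)
  also have "\<dots> = (\<Sum>e0\<in>preds e. Ncount adj n e0)"
    by (simp add: Ncount_eq_card card_image inj_on_def)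
  finally show ?thesis .
qed

lemma Ncount_pos: "e \<in> edges adj \<Longrightarrow> 1 \<le> Ncount adj n e"
proof (induction n arbitrary: e)
  case 0
  thus ?case by (simp add: Ncount_0)
next
  case (Suc n)
  obtain e0 where e0: "e0 \<in> preds e"
    using preds_nonempty Suc.prems by blast
  have "1 \<le> Ncount adj n e0"
    using Suc.IH e0 preds_subset_edges by blast
  also have "\<dots> \<le> (\<Sum>e0\<in>preds e. Ncount adj n e0)"
    using e0 by (intro member_le_sum finite_preds) auto
  finally show ?case
    by (simp add: Ncount_Suc Suc.prems)
qed

lemma Ncount_le_qmax_power: "e \<in> edges adj \<Longrightarrow> Ncount adj n e \<le> qmax adj ^ n"
proof (induction n arbitrary: e)
  case 0
  thus ?case by (simp add: Ncount_0)
next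
  case (Suc n)
  have "(\<Sum>e0\<in>preds e. Ncount adj n e0) \<le> (\<Sum>e0\<in>preds e. qmax adj ^ n)"
    using Suc.IH preds_subset_edges by (intro sum_mono) blast
  also have "\<dots> \<le> qmax adj * qmax adj ^ n"
    using card_preds_le_qmax[OF Suc.prems] by simp
  finally show ?case
    by (simp add: Ncount_Suc Suc.prems)
qed

lemma bdd_above_Ncount: "bdd_above (Ncount adj n ` edges adj)"
  using Ncount_le_qmax_power by (intro bdd_aboveI) auto

lemma Ncount_le_Rn: "e \<in> edges adj \<Longrightarrow> Ncount adj n e \<le> Rn adj n"
  unfolding Rn_def using bdd_above_Ncount by (intro cSUP_upper)

lemma Rn_attained: "\<exists>e\<in>edges adj. Rn adj n = Ncount adj n e"
proof -
  have "Ncount adj n ` edges adj \<subseteq> {..qmax adj ^ n}"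
    using Ncount_le_qmax_power by auto
  hence "finite (Ncount adj n ` edges adj)"
    using finite_subset by blast
  hence "Sup (Ncount adj n ` edges adj) \<in> Ncount adj n ` edges adj"
    using edges_nonempty by (simp add: cSup_eq_Max)
  thus ?thesis
    unfolding Rn_def by auto
qed

lemma Rn_pos: "1 \<le> Rn adj n"
  using Rn_attained Ncount_pos by metis

lemma Rn_0: "Rn adj 0 = 1"
  using Rn_attained[of 0] Ncount_0 by auto

lemma Rn_le_qmax_power: "Rn adj n \<le> qmax adj ^ n"
  using Rn_attained Ncount_le_qmax_power by metis

lemma Ncount_add_le: "e \<in> edges adj \<Longrightarrow> Ncount adj (m + n) e \<le> Ncount adj m e * Rn adj n"
proof (induction m arbitrary: e)
  case 0
  thus ?case using Ncount_le_Rn by (simp add: Ncount_0)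
next
  case (Suc m)
  have "Ncount adj (Suc m + n) e = (\<Sum>e0\<in>preds e. Ncount adj (m + n) e0)"
    by (simp add: Ncount_Suc Suc.prems)
  also have "\<dots> \<le> (\<Sum>e0\<in>preds e. Ncount adj m e0 * Rn adj n)"
    using Suc.IH preds_subset_edges by (intro sum_mono) blast
  also have "\<dots> = Ncount adj (Suc m) e * Rn adj n"
    by (simp add: Ncount_Suc Suc.prems sum_distrib_right)
  finally show ?case .
qed

lemma Rn_submult: "Rn adj (m + n) \<le> Rn adj m * Rn adj n"
proof -
  obtain e where e: "e \<in> edges adj" "Rn adj (m + n) = Ncount adj (m + n) e"
    using Rn_attained by blast
  have "Ncount adj (m + n) e \<le> Ncount adj m e * Rn adj n"
    using e(1) by (rule Ncount_add_le)
  also have "\<dots> \<le> Rn adj m * Rn adj n"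
    using Ncount_le_Rn[OF e(1)] by simp
  finally show ?thesis
    using e(2) by simp
qed

section \<open>The growth rate rho\<close>

definition rho :: real where
  "rho = lim (\<lambda>n. root n (real (Rn adj n)))"

lemma root_Rn_tendsto_rho: "(\<lambda>n. root n (real (Rn adj n))) \<longlonglongrightarrow> rho"
proof -
  define a where "a n = ln (real (Rn adj n))" for n
  have Rn_ge_1: "1 \<le> real (Rn adj n)" for n
    using Rn_pos by simp
  have "a (m + n) \<le> a m + a n" for m n
  proof -
    have "real (Rn adj (m + n)) \<le> real (Rn adj m) * real (Rn adj n)"
      using Rn_submult by (metis of_nat_le_iff of_nat_mult)
    hence "ln (real (Rn adj (m + n))) \<le> ln (real (Rn adj m) * real (Rn adj n))"
      using Rn_ge_1[of "m + n"] by (intro ln_mono) auto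
    thus ?thesis
      unfolding a_def using Rn_ge_1[of m] Rn_ge_1[of n] by (simp add: ln_mult)
  qed
  moreover have "0 \<le> a n" for n
    unfolding a_def using Rn_ge_1 by simp
  ultimately obtain L where "(\<lambda>n. a n / real n) \<longlonglongrightarrow> L"
    using fekete_subadditive unfolding convergent_def by blast
  hence "(\<lambda>n. exp (a n / real n)) \<longlonglongrightarrow> exp L"
    by (rule tendsto_exp)
  moreover have "\<forall>\<^sub>F n in sequentially. exp (a n / real n) = root n (real (Rn adj n))"
    using eventually_ge_at_top[of 1]
  proof eventually_elim
    case (elim n)
    have "0 < real (Rn adj n)"
      using Rn_ge_1[of n] by linarith
    thus ?case
      using elim by (simp add: a_def root_powr_inverse powr_def)
  qed
  ultimately have "(\<lambda>n. root n (real (Rn adj n))) \<longlonglongrightarrow> exp L"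
    by (rule Lim_transform_eventually)
  thus ?thesis
    unfolding rho_def by (simp add: limI)
qed

lemma rho_ge_1: "1 \<le> rho"
proof (rule LIMSEQ_le_const[OF root_Rn_tendsto_rho], intro exI allI impI)
  fix n :: nat assume "1 \<le> n"
  thus "1 \<le> root n (real (Rn adj n))"
    using Rn_pos[of n] by simp
qed

lemma rho_le_qmax: "rho \<le> real (qmax adj)"
proof (rule LIMSEQ_le_const2[OF root_Rn_tendsto_rho], intro exI allI impI)
  fix n :: nat assume n: "1 \<le> n"
  have "root n (real (Rn adj n)) \<le> root n (real (qmax adj) ^ n)"
    using n Rn_le_qmax_power[of n]
    by (subst real_root_le_iff) (auto simp del: of_nat_power simp: of_nat_power[symmetric])
  also have "\<dots> = real (qmax adj)"
    using n by (intro real_root_power_cancel) auto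
  finally show "root n (real (Rn adj n)) \<le> real (qmax adj)" .
qed

lemma eventually_Rn_le:
  assumes "0 < \<epsilon>"
  shows "\<exists>N. \<forall>n\<ge>N. real (Rn adj n) \<le> (rho + \<epsilon>) ^ n"
proof -
  have "\<forall>\<^sub>F n in sequentially. root n (real (Rn adj n)) < rho + \<epsilon>"
    using root_Rn_tendsto_rho assms by (intro order_tendstoD(2)) auto
  then obtain N where N: "\<forall>n\<ge>N. root n (real (Rn adj n)) < rho + \<epsilon>"
    unfolding eventually_sequentially by blast
  have "real (Rn adj n) \<le> (rho + \<epsilon>) ^ n" if n: "max N 1 \<le> n" for n
  proof -
    have "root n (real (Rn adj n)) ^ n \<le> (rho + \<epsilon>) ^ n"
      using N n by (intro power_mono) (auto simp: less_imp_le)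
    thus ?thesis
      using n by (simp add: real_root_pow_pos2)
  qed
  thus ?thesis by blast
qed

lemma rho_le_of_Rn_bound:
  assumes l: "0 < l" and C: "0 < C" and bound: "\<And>n. real (Rn adj n) \<le> C * l ^ n"
  shows "rho \<le> l"
proof -
  have "(\<lambda>n. root n C * l) \<longlonglongrightarrow> 1 * l"
    by (intro tendsto_mult LIMSEQ_root_const C tendsto_const)
  moreover have "\<forall>\<^sub>F n in sequentially. root n (real (Rn adj n)) \<le> root n C * l"
  proof (rule eventually_sequentiallyI[of 1])
    fix n :: nat assume n: "1 \<le> n"
    have "root n (real (Rn adj n)) \<le> root n (C * l ^ n)"
      using bound n by (subst real_root_le_iff) auto
    also have "\<dots> = root n C * l"
      using n l by (simp add: real_root_mult real_root_power_cancel)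
    finally show "root n (real (Rn adj n)) \<le> root n C * l" .
  qed
  ultimately show ?thesis
    using root_Rn_tendsto_rho by (simp add: tendsto_le[OF sequentially_bot])
qed

lemma summable_Rn_div_power:
  assumes "rho < l"
  shows "summable (\<lambda>n. real (Rn adj n) / l ^ n)"
proof -
  define \<mu> where "\<mu> = (rho + l) / 2"
  have \<mu>: "rho < \<mu>" "\<mu> < l" "0 < \<mu>"
    unfolding \<mu>_def using assms rho_ge_1 by auto
  obtain N where N: "\<forall>n\<ge>N. real (Rn adj n) \<le> \<mu> ^ n"
    using eventually_Rn_le[of "\<mu> - rho"] \<mu> by auto
  have "norm (real (Rn adj n) / l ^ n) \<le> (\<mu> / l) ^ n" if "N \<le> n" for n
    using N that \<mu> by (simp add: power_divide divide_right_mono)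
  moreover have "summable (\<lambda>n. (\<mu> / l) ^ n)"
    using \<mu> by (intro summable_geometric) simp
  ultimately show ?thesis
    by (rule summable_comparison_test'[rotated])
qed

lemma summable_Rn_div_power_Suc:
  assumes "rho < l"
  shows "summable (\<lambda>n. real (Rn adj n) / l ^ Suc n)"
  using summable_divide[OF summable_Rn_div_power[OF assms], of l]
  by (simp add: divide_divide_eq_left mult.commute)

end

section \<open>Lipschitz functions on paths\<close>

locale lip_space = bounded_degree_graph adj for adj :: "'v \<Rightarrow> 'v \<Rightarrow> bool" +
  fixes \<theta> :: real
  assumes theta_pos: "0 < \<theta>" and theta_lt_1: "\<theta> < 1"
begin

abbreviation "P \<equiv> paths adj"
abbreviation "d \<equiv> dtheta \<theta>"
abbreviation "T \<equiv> Tr adj"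

lemma dtheta_self [simp]: "d p p = 0"
  unfolding dtheta_def by simp

lemma dtheta_nonneg: "0 \<le> d p p'"
  unfolding dtheta_def using theta_pos by simp

lemma dtheta_pos: "p \<noteq> p' \<Longrightarrow> 0 < d p p'"
  unfolding dtheta_def using theta_pos by simp

lemma dtheta_first_edges_differ: "p 0 \<noteq> p' 0 \<Longrightarrow> d p p' = 1"
  unfolding dtheta_def by (auto intro!: Least_eq_0)

lemma dtheta_case_nat: "d (case_nat e p) (case_nat e p') = \<theta> * d p p'"
proof (cases "p = p'")
  case True
  thus ?thesis by simp
next
  case False
  then obtain j where "p j \<noteq> p' j"
    by blast
  hence "case_nat e p (Suc j) \<noteq> case_nat e p' (Suc j)"
    by simp
  hence "(LEAST i. case_nat e p i \<noteq> case_nat e p' i) = Suc (LEAST i. p i \<noteq> p' i)"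
    by (subst Least_Suc[where n="Suc j"]) auto
  moreover have "case_nat e p \<noteq> case_nat e p'"
    using False by (metis nat.case(2) ext)
  ultimately show ?thesis
    using False unfolding dtheta_def by simp
qed

definition path_bounded :: "('v path \<Rightarrow> complex) \<Rightarrow> bool" where
  "path_bounded f \<longleftrightarrow> (\<exists>B. \<forall>p\<in>P. norm (f p) \<le> B)"

definition lip_const :: "real \<Rightarrow> ('v path \<Rightarrow> complex) \<Rightarrow> bool" where
  "lip_const C f \<longleftrightarrow>
     0 \<le> C \<and> (\<forall>p\<in>P. \<forall>p'\<in>P. p 0 = p' 0 \<longrightarrow> norm (f p - f p') \<le> C * d p p')"

definition has_lip_const :: "('v path \<Rightarrow> complex) \<Rightarrow> bool" where
  "has_lip_const f \<longleftrightarrow> (\<exists>C. lip_const C f)"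

lemma path_boundedI: "(\<And>p. p \<in> P \<Longrightarrow> norm (f p) \<le> B) \<Longrightarrow> path_bounded f"
  unfolding path_bounded_def by blast

lemma norm_le_supnorm: "path_bounded f \<Longrightarrow> p \<in> P \<Longrightarrow> norm (f p) \<le> supnorm adj f"
  unfolding path_bounded_def supnorm_def by (auto intro!: cSUP_upper bdd_aboveI)

lemma supnorm_le: "(\<And>p. p \<in> P \<Longrightarrow> norm (f p) \<le> B) \<Longrightarrow> supnorm adj f \<le> B"
  unfolding supnorm_def using paths_nonempty by (intro cSUP_least) auto

lemma supnorm_nonneg: "path_bounded f \<Longrightarrow> 0 \<le> supnorm adj f"
  using paths_nonempty norm_le_supnorm[of f] by (meson all_not_in_conv norm_ge_zero order_trans)

lemma supnorm_cong: "(\<And>p. p \<in> P \<Longrightarrow> f p = g p) \<Longrightarrow> supnorm adj f = supnorm adj g"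
  unfolding supnorm_def by (intro SUP_cong) auto

lemma L1_eq_Inf: "L1 adj \<theta> f = Inf {C. lip_const C f}"
  unfolding L1_def lip_const_def by simp

lemma L1_le: "lip_const C f \<Longrightarrow> L1 adj \<theta> f \<le> C"
  unfolding L1_eq_Inf by (intro cInf_lower bdd_belowI[of _ 0]) (auto simp: lip_const_def)

lemma L1_nonneg: "has_lip_const f \<Longrightarrow> 0 \<le> L1 adj \<theta> f"
  unfolding L1_eq_Inf has_lip_const_def by (intro cInf_greatest) (auto simp: lip_const_def)

lemma L1_eq_0: "lip_const 0 f \<Longrightarrow> L1 adj \<theta> f = 0"
  using L1_le[of 0 f] L1_nonneg[of f] unfolding has_lip_const_def by force

lemma lip_const_L1:
  assumes "has_lip_const f"
  shows "lip_const (L1 adj \<theta> f) f"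
proof -
  have "norm (f p - f p') \<le> L1 adj \<theta> f * d p p'" if "p \<in> P" "p' \<in> P" "p 0 = p' 0" for p p'
  proof (cases "p = p'")
    case True
    thus ?thesis by simp
  next
    case False
    hence d_pos: "0 < d p p'"
      by (rule dtheta_pos)
    have "norm (f p - f p') / d p p' \<le> L1 adj \<theta> f"
      unfolding L1_eq_Inf
    proof (rule cInf_greatest)
      show "{C. lip_const C f} \<noteq> {}"
        using assms unfolding has_lip_const_def by auto
    next
      fix C assume "C \<in> {C. lip_const C f}"
      thus "norm (f p - f p') / d p p' \<le> C"
        using that d_pos by (auto simp: lip_const_def divide_le_eq)
    qed
    thus ?thesis
      using d_pos by (simp add: divide_le_eq)
  qed
  thus ?thesis
    unfolding lip_const_def using L1_nonneg[OF assms] by blast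
qed

lemma norm_diff_le_L1:
  "has_lip_const f \<Longrightarrow> p \<in> P \<Longrightarrow> p' \<in> P \<Longrightarrow> p 0 = p' 0 \<Longrightarrow>
     norm (f p - f p') \<le> L1 adj \<theta> f * d p p'"
  using lip_const_L1 unfolding lip_const_def by blast

lemma L1_cong: "(\<And>p. p \<in> P \<Longrightarrow> f p = g p) \<Longrightarrow> L1 adj \<theta> f = L1 adj \<theta> g"
  unfolding L1_eq_Inf lip_const_def by (intro arg_cong[where f=Inf]) auto

text \<open>Lip asks for Lipschitz bounds on islands (paths with the same initial vertex), L1 only for
  paths with the same first edge; for bounded functions the two agree, as d = 1 across first edges.\<close>

lemma Lip_iff: "f \<in> Lip adj \<theta> \<longleftrightarrow> path_bounded f \<and> has_lip_const f"
proof
  assume "f \<in> Lip adj \<theta>"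
  then obtain B C where B: "\<forall>p\<in>P. norm (f p) \<le> B"
    and C: "\<forall>p\<in>P. \<forall>p'\<in>P. fst (p 0) = fst (p' 0) \<longrightarrow> norm (f p - f p') \<le> C * d p p'"
    unfolding Lip_def by blast
  have "lip_const (max C 0) f"
    unfolding lip_const_def
  proof (intro conjI ballI impI)
    fix p p' assume "p \<in> P" "p' \<in> P" "p 0 = p' 0"
    hence "norm (f p - f p') \<le> C * d p p'"
      using C by auto
    also have "\<dots> \<le> max C 0 * d p p'"
      using dtheta_nonneg by (intro mult_right_mono) auto
    finally show "norm (f p - f p') \<le> max C 0 * d p p'" .
  qed auto
  thus "path_bounded f \<and> has_lip_const f"
    using B unfolding path_bounded_def has_lip_const_def by blast
next
  assume "path_bounded f \<and> has_lip_const f"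
  then obtain B C where B: "\<forall>p\<in>P. norm (f p) \<le> B" and C: "lip_const C f"
    unfolding path_bounded_def has_lip_const_def by blast
  have "0 \<le> B"
    using B paths_nonempty by (meson all_not_in_conv norm_ge_zero order_trans)
  have "norm (f p - f p') \<le> (C + 2 * B) * d p p'" if "p \<in> P" "p' \<in> P" for p p'
  proof (cases "p 0 = p' 0")
    case True
    hence "norm (f p - f p') \<le> C * d p p'"
      using C that unfolding lip_const_def by blast
    also have "\<dots> \<le> (C + 2 * B) * d p p'"
      using \<open>0 \<le> B\<close> dtheta_nonneg by (intro mult_right_mono) auto
    finally show ?thesis .
  next
    case False
    have "norm (f p - f p') \<le> norm (f p) + norm (f p')"
      by (rule norm_triangle_ineq4)
    also have "\<dots> \<le> C + 2 * B"
      using B C that unfolding lip_const_def by (smt (verit))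
    finally show ?thesis
      using dtheta_first_edges_differ[of p p'] False by simp
  qed
  thus "f \<in> Lip adj \<theta>"
    unfolding Lip_def using B by blast
qed

lemma Lip_of_bounds:
  assumes "\<And>p. p \<in> P \<Longrightarrow> norm (h p) \<le> a"
    and "\<And>p p'. p \<in> P \<Longrightarrow> p' \<in> P \<Longrightarrow> p 0 = p' 0 \<Longrightarrow> norm (h p - h p') \<le> b * d p p'"
    and "0 \<le> b"
  shows "h \<in> Lip adj \<theta>" and "thnorm adj \<theta> h \<le> a + b"
proof -
  have "lip_const b h"
    unfolding lip_const_def using assms(2,3) by blast
  moreover have "path_bounded h"
    using assms(1) by (rule path_boundedI)
  ultimately show "h \<in> Lip adj \<theta>"
    unfolding Lip_iff has_lip_const_def by blast
  have "supnorm adj h \<le> a"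
    using assms(1) by (rule supnorm_le)
  thus "thnorm adj \<theta> h \<le> a + b"
    unfolding thnorm_def using L1_le[OF \<open>lip_const b h\<close>] by simp
qed

lemma Lip_cong: "(\<And>p. p \<in> P \<Longrightarrow> f p = g p) \<Longrightarrow> f \<in> Lip adj \<theta> \<longleftrightarrow> g \<in> Lip adj \<theta>"
  unfolding Lip_iff has_lip_const_def lip_const_def path_bounded_def by auto

lemma thnorm_cong: "(\<And>p. p \<in> P \<Longrightarrow> f p = g p) \<Longrightarrow> thnorm adj \<theta> f = thnorm adj \<theta> g"
  unfolding thnorm_def using supnorm_cong L1_cong by metis

lemma lip_const_add: "lip_const C f \<Longrightarrow> lip_const C' g \<Longrightarrow> lip_const (C + C') (\<lambda>p. f p + g p)"
  unfolding lip_const_def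
proof (intro conjI ballI impI, simp)
  fix p p' assume
    f: "0 \<le> C \<and> (\<forall>p\<in>P. \<forall>p'\<in>P. p 0 = p' 0 \<longrightarrow> norm (f p - f p') \<le> C * d p p')" and
    g: "0 \<le> C' \<and> (\<forall>p\<in>P. \<forall>p'\<in>P. p 0 = p' 0 \<longrightarrow> norm (g p - g p') \<le> C' * d p p')" and
    pp': "p \<in> P" "p' \<in> P" "p 0 = p' 0"
  have "norm (f p + g p - (f p' + g p')) \<le> norm (f p - f p') + norm (g p - g p')"
    by (metis add_diff_add norm_triangle_ineq)
  also have "\<dots> \<le> C * d p p' + C' * d p p'"
    using f g pp' by (intro add_mono) auto
  finally show "norm (f p + g p - (f p' + g p')) \<le> (C + C') * d p p'"
    by (simp add: algebra_simps)
qed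

lemma lip_const_mult: "lip_const C f \<Longrightarrow> lip_const (norm c * C) (\<lambda>p. c * f p)"
  unfolding lip_const_def
  by (auto simp flip: right_diff_distrib simp: norm_mult mult.assoc intro!: mult_left_mono)

lemma path_bounded_add: "path_bounded f \<Longrightarrow> path_bounded g \<Longrightarrow> path_bounded (\<lambda>p. f p + g p)"
  unfolding path_bounded_def by (meson add_mono norm_triangle_le)

lemma path_bounded_mult: "path_bounded f \<Longrightarrow> path_bounded (\<lambda>p. c * f p)"
  unfolding path_bounded_def by (metis mult_left_mono norm_ge_zero norm_mult)

lemma Lip_add: "f \<in> Lip adj \<theta> \<Longrightarrow> g \<in> Lip adj \<theta> \<Longrightarrow> (\<lambda>p. f p + g p) \<in> Lip adj \<theta>"
  unfolding Lip_iff has_lip_const_def using path_bounded_add lip_const_add by blast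

lemma Lip_mult: "f \<in> Lip adj \<theta> \<Longrightarrow> (\<lambda>p. c * f p) \<in> Lip adj \<theta>"
  unfolding Lip_iff has_lip_const_def using path_bounded_mult lip_const_mult by blast

lemma Lip_diff: "f \<in> Lip adj \<theta> \<Longrightarrow> g \<in> Lip adj \<theta> \<Longrightarrow> (\<lambda>p. f p - g p) \<in> Lip adj \<theta>"
  using Lip_add[of f "\<lambda>p. (-1) * g p"] Lip_mult[of g "-1"] by simp

lemma one_in_Lip: "(\<lambda>_. 1) \<in> Lip adj \<theta>"
  unfolding Lip_iff has_lip_const_def lip_const_def path_bounded_def by auto

lemma zero_in_Lip: "(\<lambda>_. 0) \<in> Lip adj \<theta>"
  using Lip_mult[OF one_in_Lip, of 0] by simp

lemma thnorm_add:
  assumes "f \<in> Lip adj \<theta>" "g \<in> Lip adj \<theta>"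
  shows "thnorm adj \<theta> (\<lambda>p. f p + g p) \<le> thnorm adj \<theta> f + thnorm adj \<theta> g"
proof -
  have "supnorm adj (\<lambda>p. f p + g p) \<le> supnorm adj f + supnorm adj g"
    using assms unfolding Lip_iff
    by (intro supnorm_le) (meson add_mono norm_triangle_le norm_le_supnorm)
  moreover have "L1 adj \<theta> (\<lambda>p. f p + g p) \<le> L1 adj \<theta> f + L1 adj \<theta> g"
    using assms unfolding Lip_iff by (intro L1_le lip_const_add lip_const_L1) auto
  ultimately show ?thesis
    unfolding thnorm_def by simp
qed

lemma thnorm_mult_le:
  assumes "f \<in> Lip adj \<theta>"
  shows "thnorm adj \<theta> (\<lambda>p. c * f p) \<le> norm c * thnorm adj \<theta> f"
proof -
  have "supnorm adj (\<lambda>p. c * f p) \<le> norm c * supnorm adj f"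
    using assms unfolding Lip_iff
    by (intro supnorm_le) (simp add: mult_left_mono norm_mult norm_le_supnorm)
  moreover have "L1 adj \<theta> (\<lambda>p. c * f p) \<le> norm c * L1 adj \<theta> f"
    using assms unfolding Lip_iff by (intro L1_le lip_const_mult lip_const_L1) auto
  ultimately show ?thesis
    unfolding thnorm_def by (simp add: distrib_left)
qed

lemma thnorm_zero: "thnorm adj \<theta> (\<lambda>_. 0) = 0"
proof -
  have "supnorm adj (\<lambda>_. 0) = 0"
    unfolding supnorm_def using paths_nonempty by simp
  moreover have "L1 adj \<theta> (\<lambda>_. 0) = 0"
    by (rule L1_eq_0) (simp add: lip_const_def)
  ultimately show ?thesis
    by (simp add: thnorm_def)
qed

lemma thnorm_mult:
  assumes f: "f \<in> Lip adj \<theta>"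
  shows "thnorm adj \<theta> (\<lambda>p. c * f p) = norm c * thnorm adj \<theta> f"
proof (cases "c = 0")
  case True
  thus ?thesis
    using thnorm_zero by simp
next
  case False
  have "(\<lambda>p. inverse c * (c * f p)) = f"
    using False by (simp add: fun_eq_iff)
  hence "thnorm adj \<theta> f = thnorm adj \<theta> (\<lambda>p. inverse c * (c * f p))"
    by simp
  also have "\<dots> \<le> norm (inverse c) * thnorm adj \<theta> (\<lambda>p. c * f p)"
    by (intro thnorm_mult_le Lip_mult f)
  also have "\<dots> = thnorm adj \<theta> (\<lambda>p. c * f p) / norm c"
    by (simp add: norm_inverse divide_inverse_commute)
  finally have "norm c * thnorm adj \<theta> f \<le> thnorm adj \<theta> (\<lambda>p. c * f p)"
    using False by (simp add: field_simps)
  thus ?thesis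
    using thnorm_mult_le[OF f, of c] by simp
qed

lemma thnorm_diff:
  assumes "f \<in> Lip adj \<theta>" "g \<in> Lip adj \<theta>"
  shows "thnorm adj \<theta> (\<lambda>p. f p - g p) \<le> thnorm adj \<theta> f + thnorm adj \<theta> g"
  using thnorm_add[OF assms(1) Lip_mult[OF assms(2), of "-1"]] thnorm_mult[OF assms(2), of "-1"] by simp

lemma thnorm_minus_commute:
  "f \<in> Lip adj \<theta> \<Longrightarrow> g \<in> Lip adj \<theta> \<Longrightarrow>
     thnorm adj \<theta> (\<lambda>p. f p - g p) = thnorm adj \<theta> (\<lambda>p. g p - f p)"
  using thnorm_mult[OF Lip_diff[of g f], of "-1"] by simp

lemma thnorm_triangle:
  "f \<in> Lip adj \<theta> \<Longrightarrow> g \<in> Lip adj \<theta> \<Longrightarrow> h \<in> Lip adj \<theta> \<Longrightarrow>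
     thnorm adj \<theta> (\<lambda>p. f p - h p) \<le> thnorm adj \<theta> (\<lambda>p. f p - g p) + thnorm adj \<theta> (\<lambda>p. g p - h p)"
  using thnorm_add[OF Lip_diff[of f g] Lip_diff[of g h]] by simp

lemma supnorm_le_thnorm: "f \<in> Lip adj \<theta> \<Longrightarrow> supnorm adj f \<le> thnorm adj \<theta> f"
  unfolding thnorm_def Lip_iff using L1_nonneg by simp

lemma L1_le_thnorm: "f \<in> Lip adj \<theta> \<Longrightarrow> L1 adj \<theta> f \<le> thnorm adj \<theta> f"
  unfolding thnorm_def Lip_iff using supnorm_nonneg by simp

lemma thnorm_nonneg: "f \<in> Lip adj \<theta> \<Longrightarrow> 0 \<le> thnorm adj \<theta> f"
  unfolding thnorm_def Lip_iff using L1_nonneg supnorm_nonneg by simp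

lemma norm_le_thnorm: "f \<in> Lip adj \<theta> \<Longrightarrow> p \<in> P \<Longrightarrow> norm (f p) \<le> thnorm adj \<theta> f"
  using norm_le_supnorm supnorm_le_thnorm Lip_iff by (meson order_trans)

lemma vanishes_if_thnorm_eq_0:
  "f \<in> Lip adj \<theta> \<Longrightarrow> thnorm adj \<theta> f = 0 \<Longrightarrow> p \<in> P \<Longrightarrow> f p = 0"
  using norm_le_thnorm[of f p] by simp

section \<open>Iterates of the transfer operator\<close>

lemma Tr_cong: "(\<And>p. p \<in> P \<Longrightarrow> f p = g p) \<Longrightarrow> p \<in> P \<Longrightarrow> T f p = T g p"
  unfolding Tr_eq_sum_preds by (intro sum.cong refl) (auto intro: case_nat_in_paths)

lemma Tr_mult: "T (\<lambda>q. c * g q) p = c * T g p"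
  by (simp add: Tr_eq_sum_preds sum_distrib_left)

lemma Tr_diff: "T (\<lambda>q. f q - g q) p = T f p - T g p"
  by (simp add: Tr_eq_sum_preds sum_subtractf)

lemma norm_Tr_pow_le:
  assumes "\<And>p. p \<in> P \<Longrightarrow> norm (f p) \<le> B" and "p \<in> P"
  shows "norm ((T ^^ n) f p) \<le> real (Ncount adj n (p 0)) * B"
  using assms(2)
proof (induction n arbitrary: p)
  case 0
  thus ?case using assms(1) by (simp add: Ncount_0 paths_edge)
next
  case (Suc n)
  have "norm ((T ^^ Suc n) f p) = norm (\<Sum>e0\<in>preds (p 0). (T ^^ n) f (case_nat e0 p))"
    by (simp add: Tr_eq_sum_preds)
  also have "\<dots> \<le> (\<Sum>e0\<in>preds (p 0). norm ((T ^^ n) f (case_nat e0 p)))"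
    by (rule norm_sum)
  also have "\<dots> \<le> (\<Sum>e0\<in>preds (p 0). real (Ncount adj n e0) * B)"
    using Suc.IH case_nat_in_paths[OF Suc.prems] by (intro sum_mono) fastforce
  also have "\<dots> = real (Ncount adj (Suc n) (p 0)) * B"
    by (simp add: Ncount_Suc paths_edge Suc.prems sum_distrib_right)
  finally show ?case .
qed

lemma norm_Tr_pow_diff_le:
  assumes "lip_const C f" and "p \<in> P" "p' \<in> P" "p 0 = p' 0"
  shows "norm ((T ^^ n) f p - (T ^^ n) f p') \<le> real (Ncount adj n (p 0)) * \<theta> ^ n * C * d p p'"
  using assms(2-)
proof (induction n arbitrary: p p')
  case 0
  thus ?case using assms(1) by (simp add: Ncount_0 paths_edge lip_const_def)
next
  case (Suc n)
  have "norm ((T ^^ Suc n) f p - (T ^^ Suc n) f p') =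
      norm (\<Sum>e0\<in>preds (p 0). (T ^^ n) f (case_nat e0 p) - (T ^^ n) f (case_nat e0 p'))"
    using Suc.prems(3) by (simp add: Tr_eq_sum_preds sum_subtractf)
  also have "\<dots> \<le> (\<Sum>e0\<in>preds (p 0). norm ((T ^^ n) f (case_nat e0 p) - (T ^^ n) f (case_nat e0 p')))"
    by (rule norm_sum)
  also have "\<dots> \<le> (\<Sum>e0\<in>preds (p 0).
                   real (Ncount adj n e0) * \<theta> ^ n * C * d (case_nat e0 p) (case_nat e0 p'))"
  proof (intro sum_mono)
    fix e0 assume "e0 \<in> preds (p 0)"
    hence "case_nat e0 p \<in> P" "case_nat e0 p' \<in> P"
      using Suc.prems case_nat_in_paths by auto
    thus "norm ((T ^^ n) f (case_nat e0 p) - (T ^^ n) f (case_nat e0 p')) \<le>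
        real (Ncount adj n e0) * \<theta> ^ n * C * d (case_nat e0 p) (case_nat e0 p')"
      using Suc.IH[of "case_nat e0 p" "case_nat e0 p'"] by simp
  qed
  also have "\<dots> = (\<Sum>e0\<in>preds (p 0). real (Ncount adj n e0) * (\<theta> ^ Suc n * C * d p p'))"
    by (simp add: dtheta_case_nat mult_ac)
  also have "\<dots> = (\<Sum>e0\<in>preds (p 0). real (Ncount adj n e0)) * (\<theta> ^ Suc n * C * d p p')"
    by (rule sum_distrib_right[symmetric])
  also have "\<dots> = real (Ncount adj (Suc n) (p 0)) * \<theta> ^ Suc n * C * d p p'"
    by (simp add: Ncount_Suc paths_edge Suc.prems)
  finally show ?case .
qed

lemma Tr_pow_one: "p \<in> P \<Longrightarrow> (T ^^ n) (\<lambda>_. 1) p = of_nat (Ncount adj n (p 0))"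
proof (induction n arbitrary: p)
  case 0
  thus ?case by (simp add: Ncount_0 paths_edge)
next
  case (Suc n)
  have "(T ^^ Suc n) (\<lambda>_. 1) p = (\<Sum>e0\<in>preds (p 0). (T ^^ n) (\<lambda>_. 1) (case_nat e0 p))"
    by (simp add: Tr_eq_sum_preds)
  also have "\<dots> = (\<Sum>e0\<in>preds (p 0). of_nat (Ncount adj n e0))"
    using Suc.IH case_nat_in_paths[OF Suc.prems] by (intro sum.cong refl) fastforce
  finally show ?case
    by (simp add: Ncount_Suc paths_edge Suc.prems)
qed

lemma Ncount_first_le_Rn: "p \<in> P \<Longrightarrow> real (Ncount adj n (p 0)) \<le> real (Rn adj n)"
  using Ncount_le_Rn paths_edge by simp

lemma norm_Tr_pow_le_Rn:
  assumes "f \<in> Lip adj \<theta>" and "p \<in> P"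
  shows "norm ((T ^^ n) f p) \<le> real (Rn adj n) * supnorm adj f"
proof -
  have "path_bounded f"
    using assms(1) by (simp add: Lip_iff)
  hence "norm ((T ^^ n) f p) \<le> real (Ncount adj n (p 0)) * supnorm adj f"
    using assms(2) by (intro norm_Tr_pow_le norm_le_supnorm)
  also have "\<dots> \<le> real (Rn adj n) * supnorm adj f"
    using Ncount_first_le_Rn[OF assms(2)] supnorm_nonneg[OF \<open>path_bounded f\<close>]
    by (intro mult_right_mono) auto
  finally show ?thesis .
qed

lemma lip_const_Tr_pow:
  assumes "f \<in> Lip adj \<theta>"
  shows "lip_const (real (Rn adj n) * \<theta> ^ n * L1 adj \<theta> f) ((T ^^ n) f)"
  unfolding lip_const_def
proof (intro conjI ballI impI)
  have f: "has_lip_const f"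
    using assms by (simp add: Lip_iff)
  thus "0 \<le> real (Rn adj n) * \<theta> ^ n * L1 adj \<theta> f"
    using L1_nonneg theta_pos by simp
  fix p p' assume pp': "p \<in> P" "p' \<in> P" "p 0 = p' 0"
  have "norm ((T ^^ n) f p - (T ^^ n) f p') \<le>
      real (Ncount adj n (p 0)) * \<theta> ^ n * L1 adj \<theta> f * d p p'"
    using pp' f by (intro norm_Tr_pow_diff_le lip_const_L1)
  also have "\<dots> \<le> real (Rn adj n) * \<theta> ^ n * L1 adj \<theta> f * d p p'"
    using Ncount_first_le_Rn[OF pp'(1)] L1_nonneg[OF f] theta_pos dtheta_nonneg
    by (intro mult_right_mono) auto
  finally show "norm ((T ^^ n) f p - (T ^^ n) f p') \<le>
      real (Rn adj n) * \<theta> ^ n * L1 adj \<theta> f * d p p'" .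
qed

lemma Tr_pow_in_Lip:
  assumes "f \<in> Lip adj \<theta>"
  shows "(T ^^ n) f \<in> Lip adj \<theta>"
proof -
  have "path_bounded ((T ^^ n) f)"
    using norm_Tr_pow_le_Rn[OF assms] by (rule path_boundedI)
  thus ?thesis
    using lip_const_Tr_pow[OF assms] unfolding Lip_iff has_lip_const_def by blast
qed

lemma Tr_in_Lip: "f \<in> Lip adj \<theta> \<Longrightarrow> T f \<in> Lip adj \<theta>"
  using Tr_pow_in_Lip[of f 1] by simp

lemma supnorm_Tr_pow_le: "f \<in> Lip adj \<theta> \<Longrightarrow> supnorm adj ((T ^^ n) f) \<le> real (Rn adj n) * supnorm adj f"
  by (intro supnorm_le norm_Tr_pow_le_Rn)

lemma thnorm_Tr_pow_le:
  assumes "f \<in> Lip adj \<theta>"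
  shows "thnorm adj \<theta> ((T ^^ n) f) \<le> real (Rn adj n) * (\<theta> ^ n * L1 adj \<theta> f + supnorm adj f)"
  unfolding thnorm_def distrib_left mult.assoc[symmetric]
  by (intro add_mono L1_le lip_const_Tr_pow supnorm_Tr_pow_le assms)

lemma thnorm_Tr_pow_le_thnorm:
  assumes "f \<in> Lip adj \<theta>"
  shows "thnorm adj \<theta> ((T ^^ n) f) \<le> real (Rn adj n) * thnorm adj \<theta> f"
proof -
  have "\<theta> ^ n * L1 adj \<theta> f \<le> L1 adj \<theta> f"
    using assms L1_nonneg theta_pos theta_lt_1
    by (intro mult_left_le_one_le) (auto simp: Lip_iff power_le_one)
  hence "real (Rn adj n) * (\<theta> ^ n * L1 adj \<theta> f + supnorm adj f) \<le> real (Rn adj n) * thnorm adj \<theta> f"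
    unfolding thnorm_def by (intro mult_left_mono) auto
  thus ?thesis
    using thnorm_Tr_pow_le[OF assms, of n] by linarith
qed

lemma supnorm_Tr_pow_one: "supnorm adj ((T ^^ n) (\<lambda>_. 1)) = real (Rn adj n)"
proof (rule antisym)
  show "supnorm adj ((T ^^ n) (\<lambda>_. 1)) \<le> real (Rn adj n)"
    by (rule supnorm_le) (simp add: Tr_pow_one Ncount_le_Rn paths_edge)
  obtain e where e: "e \<in> edges adj" "Rn adj n = Ncount adj n e"
    using Rn_attained by blast
  obtain p where p: "p \<in> P" "p 0 = e"
    using path_through_edge[OF e(1)] by blast
  have "path_bounded ((T ^^ n) (\<lambda>_. 1))"
    by (rule path_boundedI[of _ "real (Rn adj n)"]) (simp add: Tr_pow_one Ncount_le_Rn paths_edge)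
  from norm_le_supnorm[OF this p(1)]
  show "real (Rn adj n) \<le> supnorm adj ((T ^^ n) (\<lambda>_. 1))"
    using p e by (simp add: Tr_pow_one)
qed

lemma thnorm_Tr_pow_one: "thnorm adj \<theta> ((T ^^ n) (\<lambda>_. 1)) = real (Rn adj n)"
proof -
  have "lip_const 0 ((T ^^ n) (\<lambda>_. 1))"
    unfolding lip_const_def by (auto simp: Tr_pow_one)
  thus ?thesis
    unfolding thnorm_def using L1_eq_0 supnorm_Tr_pow_one by simp
qed

lemma opnorm_thnorm_Tr_pow: "opnorm_on (Lip adj \<theta>) (thnorm adj \<theta>) (T ^^ n) = real (Rn adj n)"
  using thnorm_Tr_pow_one[of n] thnorm_Tr_pow_one[of 0]
  by (intro opnorm_on_eqI[where g="\<lambda>_. 1"])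
    (auto simp: thnorm_nonneg thnorm_Tr_pow_le_thnorm one_in_Lip Rn_0)

lemma opnorm_supnorm_Tr_pow: "opnorm_on (Lip adj \<theta>) (supnorm adj) (T ^^ n) = real (Rn adj n)"
proof (rule opnorm_on_eqI[where g="\<lambda>_. 1"])
  show "\<And>f. f \<in> Lip adj \<theta> \<Longrightarrow> 0 \<le> supnorm adj f"
    using supnorm_nonneg Lip_iff by blast
  show "\<And>f. f \<in> Lip adj \<theta> \<Longrightarrow> supnorm adj ((T ^^ n) f) \<le> real (Rn adj n) * supnorm adj f"
    by (rule supnorm_Tr_pow_le)
  show "(\<lambda>_. 1) \<in> Lip adj \<theta>"
    by (rule one_in_Lip)
  show "supnorm adj (\<lambda>_. 1) \<noteq> 0"
    and "supnorm adj ((T ^^ n) (\<lambda>_. 1)) = real (Rn adj n) * supnorm adj (\<lambda>_. 1)"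
    using supnorm_Tr_pow_one[of n] supnorm_Tr_pow_one[of 0] by (simp_all add: Rn_0)
qed

lemma thnorm_Tr_pow_le_eventually:
  assumes "0 < \<epsilon>"
  shows "\<exists>N. \<forall>n\<ge>N. \<forall>f \<in> Lip adj \<theta>.
           thnorm adj \<theta> ((T ^^ n) f) \<le> (rho + \<epsilon>) ^ n * (\<theta> ^ n * L1 adj \<theta> f + supnorm adj f)"
proof -
  obtain N where N: "\<forall>n\<ge>N. real (Rn adj n) \<le> (rho + \<epsilon>) ^ n"
    using eventually_Rn_le[OF assms] by blast
  have "thnorm adj \<theta> ((T ^^ n) f) \<le> (rho + \<epsilon>) ^ n * (\<theta> ^ n * L1 adj \<theta> f + supnorm adj f)"
    if "N \<le> n" "f \<in> Lip adj \<theta>" for n f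
  proof -
    have "0 \<le> \<theta> ^ n * L1 adj \<theta> f + supnorm adj f"
      using that(2) theta_pos L1_nonneg supnorm_nonneg unfolding Lip_iff by simp
    thus ?thesis
      using thnorm_Tr_pow_le[OF that(2), of n] N that(1)
      by (meson mult_right_mono order_trans)
  qed
  thus ?thesis by blast
qed

section \<open>The spectrum outside the disc of radius rho\<close>

lemma Tr_suminf:
  assumes "\<And>p. p \<in> P \<Longrightarrow> summable (\<lambda>n. F n p)" and "p \<in> P"
  shows "summable (\<lambda>n. T (F n) p)" and "T (\<lambda>q. \<Sum>n. F n q) p = (\<Sum>n. T (F n) p)"
proof -
  have "summable (\<lambda>n. F n (case_nat e0 p))" if "e0 \<in> preds (p 0)" for e0
    using assms case_nat_in_paths that by blast
  thus "summable (\<lambda>n. T (F n) p)" and "T (\<lambda>q. \<Sum>n. F n q) p = (\<Sum>n. T (F n) p)"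
    unfolding Tr_eq_sum_preds by (auto intro: summable_sum simp: suminf_sum)
qed

lemma Lip_suminf:
  assumes F: "\<And>n. F n \<in> Lip adj \<theta>" and b: "\<And>n. thnorm adj \<theta> (F n) \<le> b n" and "summable b"
  shows "\<And>p. p \<in> P \<Longrightarrow> summable (\<lambda>n. F n p)"
    and "(\<lambda>p. \<Sum>n. F n p) \<in> Lip adj \<theta>"
    and "thnorm adj \<theta> (\<lambda>p. \<Sum>n. F n p) \<le> 2 * suminf b"
proof -
  have norm_le: "norm (F n p) \<le> b n" if "p \<in> P" for n p
    using norm_le_thnorm[OF F that] b by (rule order_trans)
  have diff_le: "norm (F n p - F n p') \<le> b n * d p p'" if "p \<in> P" "p' \<in> P" "p 0 = p' 0" for n p p'
  proof -
    have "norm (F n p - F n p') \<le> L1 adj \<theta> (F n) * d p p'"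
      using F[of n] that by (intro norm_diff_le_L1) (auto simp: Lip_iff)
    also have "\<dots> \<le> b n * d p p'"
      using L1_le_thnorm[OF F] b dtheta_nonneg by (intro mult_right_mono) (auto intro: order_trans)
    finally show ?thesis .
  qed
  show summable: "summable (\<lambda>n. F n p)" if "p \<in> P" for p
    using \<open>summable b\<close> norm_le[OF that] by (rule summable_comparison_test')
  have "norm (\<Sum>n. F n p) \<le> suminf b" if "p \<in> P" for p
    using norm_le[OF that] \<open>summable b\<close> by (rule norm_suminf_le)
  moreover have "norm ((\<Sum>n. F n p) - (\<Sum>n. F n p')) \<le> suminf b * d p p'"
    if "p \<in> P" "p' \<in> P" "p 0 = p' 0" for p p'
  proof -
    have "(\<Sum>n. F n p) - (\<Sum>n. F n p') = (\<Sum>n. F n p - F n p')"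
      using summable that by (intro suminf_diff) auto
    also have "norm \<dots> \<le> (\<Sum>n. b n * d p p')"
      using diff_le[OF that] by (intro norm_suminf_le summable_mult2 \<open>summable b\<close>)
    also have "\<dots> = suminf b * d p p'"
      using suminf_mult2[OF \<open>summable b\<close>] by simp
    finally show ?thesis .
  qed
  moreover have "0 \<le> suminf b"
    using b thnorm_nonneg[OF F] \<open>summable b\<close> by (intro suminf_nonneg) (auto intro: order_trans)
  ultimately show "(\<lambda>p. \<Sum>n. F n p) \<in> Lip adj \<theta>" and "thnorm adj \<theta> (\<lambda>p. \<Sum>n. F n p) \<le> 2 * suminf b"
    using Lip_of_bounds[of "\<lambda>p. \<Sum>n. F n p" "suminf b" "suminf b"] by auto
qed

lemma Tr_pow_eigenfunction:
  assumes "\<And>p. p \<in> P \<Longrightarrow> T f p = z * f p" and "p \<in> P"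
  shows "(T ^^ n) f p = z ^ n * f p"
  using assms(2)
proof (induction n arbitrary: p)
  case 0
  thus ?case by simp
next
  case (Suc n)
  have "(T ^^ Suc n) f p = T ((T ^^ n) f) p"
    by simp
  also have "\<dots> = T (\<lambda>q. z ^ n * f q) p"
    by (rule Tr_cong[OF Suc.IH Suc.prems])
  also have "\<dots> = z ^ Suc n * f p"
    using assms(1)[OF Suc.prems] by (simp add: Tr_mult)
  finally show ?case .
qed

lemma eigenfunction_eq_0_if_norm_gt_rho:
  assumes z: "rho < norm z" and f: "f \<in> Lip adj \<theta>"
    and eigen: "\<forall>p\<in>P. z * f p - T f p = 0" and p: "p \<in> P"
  shows "f p = 0"
proof -
  have "0 < norm z"
    using z rho_ge_1 by linarith
  have "norm (f p) \<le> supnorm adj f * (real (Rn adj n) / norm z ^ n)" for n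
  proof -
    have "(T ^^ n) f p = z ^ n * f p"
      using eigen p by (intro Tr_pow_eigenfunction) auto
    hence "norm z ^ n * norm (f p) \<le> real (Rn adj n) * supnorm adj f"
      using norm_Tr_pow_le_Rn[OF f p, of n] by (simp add: norm_mult norm_power)
    thus ?thesis
      using \<open>0 < norm z\<close> by (simp add: field_simps)
  qed
  moreover have "(\<lambda>n. supnorm adj f * (real (Rn adj n) / norm z ^ n)) \<longlonglongrightarrow> supnorm adj f * 0"
    by (intro tendsto_mult tendsto_const summable_LIMSEQ_zero summable_Rn_div_power z)
  ultimately have "norm (f p) \<le> 0"
    by (intro LIMSEQ_le_const[of _ _ "norm (f p)"]) (auto intro: tendsto_le)
  thus "f p = 0" by simp
qed

lemma neumann_series_solves:
  assumes z: "rho < norm z" and g: "g \<in> Lip adj \<theta>"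
  defines "f \<equiv> \<lambda>p. \<Sum>n. inverse (z ^ Suc n) * (T ^^ n) g p"
  shows "f \<in> Lip adj \<theta>" and "\<And>p. p \<in> P \<Longrightarrow> z * f p - T f p = g p"
proof -
  define F where "F n = (\<lambda>p. inverse (z ^ Suc n) * (T ^^ n) g p)" for n
  define b where "b n = thnorm adj \<theta> g * (real (Rn adj n) / norm z ^ Suc n)" for n
  have "z \<noteq> 0"
    using z rho_ge_1 by auto
  have F: "F n \<in> Lip adj \<theta>" for n
    unfolding F_def by (intro Lip_mult Tr_pow_in_Lip g)
  have "thnorm adj \<theta> (F n) \<le> b n" for n
  proof -
    have "thnorm adj \<theta> (F n) = norm (inverse (z ^ Suc n)) * thnorm adj \<theta> ((T ^^ n) g)"
      unfolding F_def by (rule thnorm_mult[OF Tr_pow_in_Lip[OF g]])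
    also have "\<dots> = thnorm adj \<theta> ((T ^^ n) g) / norm z ^ Suc n"
      by (simp only: norm_inverse norm_power divide_inverse mult.commute)
    also have "\<dots> \<le> real (Rn adj n) * thnorm adj \<theta> g / norm z ^ Suc n"
      using thnorm_Tr_pow_le_thnorm[OF g] by (intro divide_right_mono) auto
    also have "\<dots> = b n"
      unfolding b_def by (simp add: field_simps)
    finally show ?thesis .
  qed
  moreover have "summable b"
    unfolding b_def by (intro summable_mult summable_Rn_div_power_Suc z)
  ultimately have summable: "\<And>p. p \<in> P \<Longrightarrow> summable (\<lambda>n. F n p)"
    and "(\<lambda>p. \<Sum>n. F n p) \<in> Lip adj \<theta>"
    using Lip_suminf(1,2)[of F b, OF F] by blast+
  thus "f \<in> Lip adj \<theta>"
    unfolding f_def F_def by simp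
  fix p assume p: "p \<in> P"
  have "T f p = (\<Sum>n. T (F n) p)"
    unfolding f_def using Tr_suminf(2)[OF summable p] by (simp add: F_def)
  also have "\<dots> = (\<Sum>n. inverse (z ^ Suc n) * (T ^^ Suc n) g p)"
    by (simp add: F_def Tr_mult)
  finally have Tf: "T f p = (\<Sum>n. inverse (z ^ Suc n) * (T ^^ Suc n) g p)" .
  define a where "a n = inverse (z ^ n) * (T ^^ n) g p" for n
  have zF: "(\<lambda>n. z * F n p) = a"
    unfolding F_def a_def using \<open>z \<noteq> 0\<close> by (simp add: fun_eq_iff field_simps)
  hence "summable a"
    using summable_mult[OF summable[OF p], of z] by simp
  have "z * f p = (\<Sum>n. z * F n p)"
    unfolding f_def F_def using summable[OF p] by (simp add: F_def suminf_mult)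
  also have "\<dots> = a 0 + (\<Sum>n. a (Suc n))"
    using suminf_split_head[OF \<open>summable a\<close>] zF by simp
  also have "\<dots> = g p + T f p"
    unfolding Tf a_def by simp
  finally show "z * f p - T f p = g p"
    by simp
qed

lemma notin_spectrum_if_norm_gt_rho:
  assumes "rho < norm z"
  shows "z \<notin> spectrum_Lip adj \<theta>"
proof -
  have "\<forall>f\<in>Lip adj \<theta>. (\<forall>p\<in>P. z * f p - T f p = 0) \<longrightarrow> (\<forall>p\<in>P. f p = 0)"
    using eigenfunction_eq_0_if_norm_gt_rho[OF assms] by blast
  moreover have "\<exists>f\<in>Lip adj \<theta>. \<forall>p\<in>P. z * f p - T f p = g p" if "g \<in> Lip adj \<theta>" for g
    using neumann_series_solves[OF assms that]
    by (intro bexI[where x="\<lambda>p. \<Sum>n. inverse (z ^ Suc n) * (T ^^ n) g p"]) auto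
  ultimately show ?thesis
    unfolding spectrum_Lip_def by blast
qed

section \<open>Completeness and the bounded inverse theorem\<close>

text \<open>Lip modulo equality on paths, with the representatives vanishing off paths; on it the
  seminorm thnorm induces a metric.\<close>

definition LipP :: "('v path \<Rightarrow> complex) set" where
  "LipP = {f \<in> Lip adj \<theta>. \<forall>p. p \<notin> P \<longrightarrow> f p = 0}"

definition thdist :: "('v path \<Rightarrow> complex) \<Rightarrow> ('v path \<Rightarrow> complex) \<Rightarrow> real" where
  "thdist f g = (if f \<in> LipP \<and> g \<in> LipP then thnorm adj \<theta> (\<lambda>p. f p - g p) else 0)"

definition restrict_paths :: "('v path \<Rightarrow> complex) \<Rightarrow> 'v path \<Rightarrow> complex" where
  "restrict_paths f p = (if p \<in> P then f p else 0)"

lemma LipP_subset_Lip: "f \<in> LipP \<Longrightarrow> f \<in> Lip adj \<theta>"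
  unfolding LipP_def by auto

lemma restrict_paths_in_LipP: "f \<in> Lip adj \<theta> \<Longrightarrow> restrict_paths f \<in> LipP"
  unfolding LipP_def using Lip_cong[of "restrict_paths f" f] by (auto simp: restrict_paths_def)

lemma thnorm_restrict_paths: "thnorm adj \<theta> (restrict_paths f) = thnorm adj \<theta> f"
  unfolding restrict_paths_def by (rule thnorm_cong) simp

lemma LipP_add: "f \<in> LipP \<Longrightarrow> g \<in> LipP \<Longrightarrow> (\<lambda>p. f p + g p) \<in> LipP"
  unfolding LipP_def using Lip_add by auto

lemma LipP_diff: "f \<in> LipP \<Longrightarrow> g \<in> LipP \<Longrightarrow> (\<lambda>p. f p - g p) \<in> LipP"
  unfolding LipP_def using Lip_diff by auto

lemma LipP_mult: "f \<in> LipP \<Longrightarrow> (\<lambda>p. c * f p) \<in> LipP"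
  unfolding LipP_def using Lip_mult by auto

lemma zero_in_LipP: "(\<lambda>_. 0) \<in> LipP"
  unfolding LipP_def using zero_in_Lip by auto

lemma metric_space_LipP: "Metric_space LipP thdist"
proof
  fix f g
  show "0 \<le> thdist f g"
    unfolding thdist_def using thnorm_nonneg LipP_diff LipP_subset_Lip by auto
  show "thdist f g = thdist g f"
    unfolding thdist_def using thnorm_minus_commute LipP_subset_Lip by auto
next
  fix f g assume fg: "f \<in> LipP" "g \<in> LipP"
  show "thdist f g = 0 \<longleftrightarrow> f = g"
  proof
    assume "thdist f g = 0"
    hence "f p - g p = 0" if "p \<in> P" for p
      using fg that vanishes_if_thnorm_eq_0[OF Lip_diff[OF LipP_subset_Lip LipP_subset_Lip, OF fg]]
      unfolding thdist_def by simp
    moreover have "f p = 0" "g p = 0" if "p \<notin> P" for p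
      using fg that unfolding LipP_def by auto
    ultimately show "f = g"
      by (metis eq_iff_diff_eq_0 ext)
  next
    assume "f = g"
    thus "thdist f g = 0"
      unfolding thdist_def using thnorm_zero by simp
  qed
next
  fix f g h assume "f \<in> LipP" "g \<in> LipP" "h \<in> LipP"
  thus "thdist f h \<le> thdist f g + thdist g h"
    unfolding thdist_def using thnorm_triangle LipP_subset_Lip by simp
qed

sublocale LM: Metric_space LipP thdist
  by (rule metric_space_LipP)

lemma thnorm_diff_pointwise_limit_le:
  assumes \<sigma>: "\<And>n. \<sigma> n \<in> Lip adj \<theta>"
    and cauchy: "\<And>m. N \<le> m \<Longrightarrow> thnorm adj \<theta> (\<lambda>p. \<sigma> n p - \<sigma> m p) \<le> e"
    and lim: "\<And>p. p \<in> P \<Longrightarrow> (\<lambda>m. \<sigma> m p) \<longlonglongrightarrow> l p"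
    and "0 \<le> e"
  shows "(\<lambda>p. \<sigma> n p - l p) \<in> Lip adj \<theta>" and "thnorm adj \<theta> (\<lambda>p. \<sigma> n p - l p) \<le> 2 * e"
proof -
  have diff: "(\<lambda>p. \<sigma> n p - \<sigma> m p) \<in> Lip adj \<theta>" for m
    using \<sigma> Lip_diff by blast
  have "norm (\<sigma> n p - l p) \<le> e" if p: "p \<in> P" for p
  proof (rule LIMSEQ_le_const2)
    show "(\<lambda>m. norm (\<sigma> n p - \<sigma> m p)) \<longlonglongrightarrow> norm (\<sigma> n p - l p)"
      by (intro tendsto_norm tendsto_diff tendsto_const lim p)
    show "\<exists>N. \<forall>m\<ge>N. norm (\<sigma> n p - \<sigma> m p) \<le> e"
      using norm_le_thnorm[OF diff p] cauchy by (meson order_trans)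
  qed
  moreover have "norm ((\<sigma> n p - l p) - (\<sigma> n p' - l p')) \<le> e * d p p'"
    if pp': "p \<in> P" "p' \<in> P" "p 0 = p' 0" for p p'
  proof (rule LIMSEQ_le_const2)
    show "(\<lambda>m. norm ((\<sigma> n p - \<sigma> m p) - (\<sigma> n p' - \<sigma> m p'))) \<longlonglongrightarrow>
        norm ((\<sigma> n p - l p) - (\<sigma> n p' - l p'))"
      by (intro tendsto_norm tendsto_diff tendsto_const lim pp')
    have "norm ((\<sigma> n p - \<sigma> m p) - (\<sigma> n p' - \<sigma> m p')) \<le> e * d p p'" if "N \<le> m" for m
    proof -
      have "norm ((\<sigma> n p - \<sigma> m p) - (\<sigma> n p' - \<sigma> m p')) \<le>
          L1 adj \<theta> (\<lambda>p. \<sigma> n p - \<sigma> m p) * d p p'"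
        using diff[of m] pp' by (intro norm_diff_le_L1) (auto simp: Lip_iff)
      also have "\<dots> \<le> e * d p p'"
        using L1_le_thnorm[OF diff[of m]] cauchy[OF that] dtheta_nonneg
        by (intro mult_right_mono) auto
      finally show ?thesis .
    qed
    thus "\<exists>N. \<forall>m\<ge>N. norm ((\<sigma> n p - \<sigma> m p) - (\<sigma> n p' - \<sigma> m p')) \<le> e * d p p'"
      by blast
  qed
  ultimately show "(\<lambda>p. \<sigma> n p - l p) \<in> Lip adj \<theta>" and "thnorm adj \<theta> (\<lambda>p. \<sigma> n p - l p) \<le> 2 * e"
    using Lip_of_bounds[of "\<lambda>p. \<sigma> n p - l p" e e] \<open>0 \<le> e\<close> by auto
qed

lemma MCauchy_pointwise_convergent:
  assumes "LM.MCauchy \<sigma>" and p: "p \<in> P"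
  shows "convergent (\<lambda>n. \<sigma> n p)"
proof -
  have \<sigma>: "\<And>n. \<sigma> n \<in> LipP"
    and cauchy: "\<And>\<epsilon>. 0 < \<epsilon> \<Longrightarrow> \<exists>N. \<forall>n m. N \<le> n \<longrightarrow> N \<le> m \<longrightarrow> thdist (\<sigma> n) (\<sigma> m) < \<epsilon>"
    using assms(1) unfolding LM.MCauchy_def by auto
  have dist_le: "dist (\<sigma> m p) (\<sigma> n p) \<le> thdist (\<sigma> m) (\<sigma> n)" for m n
    using norm_le_thnorm[OF Lip_diff[OF LipP_subset_Lip LipP_subset_Lip, OF \<sigma> \<sigma>] p]
    by (simp add: thdist_def dist_norm \<sigma>)
  have "Cauchy (\<lambda>n. \<sigma> n p)"
  proof (rule metric_CauchyI)
    fix \<epsilon> :: real assume "0 < \<epsilon>"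
    then obtain N where "\<forall>n m. N \<le> n \<longrightarrow> N \<le> m \<longrightarrow> thdist (\<sigma> n) (\<sigma> m) < \<epsilon>"
      using cauchy by blast
    thus "\<exists>M. \<forall>m\<ge>M. \<forall>n\<ge>M. dist (\<sigma> m p) (\<sigma> n p) < \<epsilon>"
      using dist_le order_le_less_trans by blast
  qed
  thus ?thesis
    by (simp add: Cauchy_convergent_iff)
qed

lemma mcomplete_LipP: "LM.mcomplete"
  unfolding LM.mcomplete_def
proof (intro allI impI)
  fix \<sigma> assume "LM.MCauchy \<sigma>"
  hence \<sigma>: "\<And>n. \<sigma> n \<in> LipP"
    and cauchy: "\<And>\<epsilon>. 0 < \<epsilon> \<Longrightarrow> \<exists>N. \<forall>n m. N \<le> n \<longrightarrow> N \<le> m \<longrightarrow> thdist (\<sigma> n) (\<sigma> m) < \<epsilon>"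
    unfolding LM.MCauchy_def by auto
  have \<sigma>_Lip: "\<sigma> n \<in> Lip adj \<theta>" for n
    using \<sigma> LipP_subset_Lip by blast
  have thdist_eq: "thdist (\<sigma> n) (\<sigma> m) = thnorm adj \<theta> (\<lambda>p. \<sigma> n p - \<sigma> m p)" for n m
    using \<sigma> by (simp add: thdist_def)
  define l where "l p = (if p \<in> P then lim (\<lambda>n. \<sigma> n p) else 0)" for p
  have lim: "(\<lambda>n. \<sigma> n p) \<longlonglongrightarrow> l p" if "p \<in> P" for p
    using MCauchy_pointwise_convergent[OF \<open>LM.MCauchy \<sigma>\<close> that] that
    unfolding l_def by (simp add: convergent_LIMSEQ_iff)
  have close: "(\<lambda>p. \<sigma> n p - l p) \<in> Lip adj \<theta>" "thnorm adj \<theta> (\<lambda>p. \<sigma> n p - l p) \<le> 2 * \<epsilon>"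
    if N: "\<forall>n m. N \<le> n \<longrightarrow> N \<le> m \<longrightarrow> thdist (\<sigma> n) (\<sigma> m) < \<epsilon>" and "N \<le> n" "0 < \<epsilon>" for N n \<epsilon>
  proof -
    have "thnorm adj \<theta> (\<lambda>p. \<sigma> n p - \<sigma> m p) \<le> \<epsilon>" if "N \<le> m" for m
      using N \<open>N \<le> n\<close> that thdist_eq less_imp_le by metis
    thus "(\<lambda>p. \<sigma> n p - l p) \<in> Lip adj \<theta>" "thnorm adj \<theta> (\<lambda>p. \<sigma> n p - l p) \<le> 2 * \<epsilon>"
      using thnorm_diff_pointwise_limit_le[of \<sigma> N n \<epsilon> l, OF \<sigma>_Lip _ lim] \<open>0 < \<epsilon>\<close> by auto
  qed
  obtain N1 where N1: "\<forall>n m. N1 \<le> n \<longrightarrow> N1 \<le> m \<longrightarrow> thdist (\<sigma> n) (\<sigma> m) < 1"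
    using cauchy[of 1] by auto
  have "l \<in> Lip adj \<theta>"
    using Lip_diff[OF \<sigma>_Lip[of N1] close(1)[OF N1 order_refl zero_less_one]] by simp
  hence "l \<in> LipP"
    unfolding LipP_def by (auto simp: l_def)
  have "limitin LM.mtopology \<sigma> l sequentially"
    unfolding LM.limitin_metric
  proof (intro conjI allI impI \<open>l \<in> LipP\<close>)
    fix \<epsilon> :: real assume "0 < \<epsilon>"
    then obtain N where N: "\<forall>n m. N \<le> n \<longrightarrow> N \<le> m \<longrightarrow> thdist (\<sigma> n) (\<sigma> m) < \<epsilon> / 3"
      using cauchy[of "\<epsilon> / 3"] by auto
    show "\<forall>\<^sub>F n in sequentially. \<sigma> n \<in> LipP \<and> thdist (\<sigma> n) l < \<epsilon>"
    proof (rule eventually_sequentiallyI[of N])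
      fix n assume "N \<le> n"
      hence "thnorm adj \<theta> (\<lambda>p. \<sigma> n p - l p) \<le> 2 * (\<epsilon> / 3)"
        using close(2)[OF N] \<open>0 < \<epsilon>\<close> by auto
      thus "\<sigma> n \<in> LipP \<and> thdist (\<sigma> n) l < \<epsilon>"
        unfolding thdist_def using \<sigma> \<open>l \<in> LipP\<close> \<open>0 < \<epsilon>\<close> by auto
    qed
  qed
  thus "\<exists>l. limitin LM.mtopology \<sigma> l sequentially"
    by blast
qed

definition shifted_T :: "complex \<Rightarrow> ('v path \<Rightarrow> complex) \<Rightarrow> 'v path \<Rightarrow> complex" where
  "shifted_T z f p = (if p \<in> P then z * f p - T f p else 0)"

lemma shifted_T_in_LipP:
  assumes "f \<in> Lip adj \<theta>"
  shows "shifted_T z f \<in> LipP"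
proof -
  have "(\<lambda>p. z * f p - T f p) \<in> Lip adj \<theta>"
    using assms by (intro Lip_diff Lip_mult Tr_in_Lip)
  moreover have "shifted_T z f = restrict_paths (\<lambda>p. z * f p - T f p)"
    by (simp add: fun_eq_iff shifted_T_def restrict_paths_def)
  ultimately show ?thesis
    using restrict_paths_in_LipP by simp
qed

lemma shifted_T_diff: "shifted_T z (\<lambda>p. f p - g p) p = shifted_T z f p - shifted_T z g p"
  by (simp add: shifted_T_def Tr_diff algebra_simps)

lemma shifted_T_mult: "shifted_T z (\<lambda>p. c * f p) p = c * shifted_T z f p"
  by (simp add: shifted_T_def Tr_mult algebra_simps)

lemma shifted_T_restrict_paths: "shifted_T z (restrict_paths f) = shifted_T z f"
proof
  fix p
  show "shifted_T z (restrict_paths f) p = shifted_T z f p"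
    using Tr_cong[of "restrict_paths f" f p] by (simp add: shifted_T_def restrict_paths_def)
qed

lemma notin_spectrum_LipD:
  assumes "z \<notin> spectrum_Lip adj \<theta>"
  shows "\<And>f p. f \<in> Lip adj \<theta> \<Longrightarrow> \<forall>p\<in>P. z * f p - T f p = 0 \<Longrightarrow> p \<in> P \<Longrightarrow> f p = 0"
    and "\<And>g. g \<in> Lip adj \<theta> \<Longrightarrow> \<exists>f\<in>Lip adj \<theta>. \<forall>p\<in>P. z * f p - T f p = g p"
  using assms unfolding spectrum_Lip_def by blast+

lemma Baire_ball_in_closure_shifted_T:
  assumes surj: "\<And>g. g \<in> Lip adj \<theta> \<Longrightarrow> \<exists>f\<in>Lip adj \<theta>. \<forall>p\<in>P. z * f p - T f p = g p"
  obtains k :: nat and g0 r where "0 < r" "g0 \<in> LipP"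
    "LM.mball g0 r \<subseteq>
       LM.mtopology closure_of {shifted_T z f |f. f \<in> LipP \<and> thnorm adj \<theta> f \<le> real k}"
proof -
  define V where "V k = {shifted_T z f |f. f \<in> LipP \<and> thnorm adj \<theta> f \<le> real k}" for k :: nat
  define F where "F k = LM.mtopology closure_of V k" for k
  have "V k \<subseteq> LipP" for k
    unfolding V_def using shifted_T_in_LipP LipP_subset_Lip by auto
  have "LipP \<subseteq> \<Union>(range F)"
  proof
    fix g assume g: "g \<in> LipP"
    obtain f where f: "f \<in> Lip adj \<theta>" "\<forall>p\<in>P. z * f p - T f p = g p"
      using surj g LipP_subset_Lip by blast
    have "shifted_T z (restrict_paths f) = g"
      using f(2) g unfolding shifted_T_restrict_paths by (auto simp: fun_eq_iff shifted_T_def LipP_def)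
    moreover obtain k :: nat where "thnorm adj \<theta> (restrict_paths f) \<le> real k"
      using real_arch_simple by blast
    ultimately have "g \<in> V k"
      unfolding V_def using restrict_paths_in_LipP[OF f(1)] by blast
    hence "g \<in> F k"
      unfolding F_def using \<open>V k \<subseteq> LipP\<close> closure_of_subset[of "V k" LM.mtopology] by auto
    thus "g \<in> \<Union>(range F)"
      by blast
  qed
  hence "\<Union>(range F) = LipP"
    using closure_of_subset_topspace unfolding F_def by fastforce
  have "\<exists>k. LM.mtopology interior_of F k \<noteq> {}"
  proof (rule ccontr)
    assume "\<nexists>k. LM.mtopology interior_of F k \<noteq> {}"
    hence "LM.mtopology interior_of \<Union>(range F) = {}"
      by (intro LM.metric_Baire_category_alt mcomplete_LipP) (auto simp: F_def)
    thus False
      using \<open>\<Union>(range F) = LipP\<close> interior_of_topspace[of LM.mtopology] zero_in_LipP by auto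
  qed
  then obtain k g0 where "g0 \<in> LM.mtopology interior_of F k"
    by blast
  then obtain r where "0 < r" "LM.mball g0 r \<subseteq> F k" "g0 \<in> LipP"
    unfolding LM.metric_interior_of by blast
  thus ?thesis
    using that unfolding F_def V_def by blast
qed

text \<open>The usual step of the open mapping theorem: the closure of the image of a ball absorbs a
  ball around g0, hence (by translation) one around 0.\<close>

lemma approx_near_zero_by_shifted_T:
  assumes "0 < r" "g0 \<in> LipP"
    and ball: "LM.mball g0 r \<subseteq>
                 LM.mtopology closure_of {shifted_T z f |f. f \<in> LipP \<and> thnorm adj \<theta> f \<le> k}"
      (is "_ \<subseteq> LM.mtopology closure_of ?S")
    and g: "g \<in> LipP" "thnorm adj \<theta> g < r" and "0 < \<epsilon>"
  shows "\<exists>f\<in>LipP. thnorm adj \<theta> f \<le> 2 * k \<and> thnorm adj \<theta> (\<lambda>p. shifted_T z f p - g p) < \<epsilon>"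
proof -
  have approx: "\<exists>f\<in>LipP. thnorm adj \<theta> f \<le> k \<and> thdist x (shifted_T z f) < \<epsilon> / 2"
    if "x \<in> LM.mball g0 r" for x
  proof -
    have "x \<in> LM.mtopology closure_of ?S"
      using ball that by blast
    hence "\<forall>r>0. \<exists>y\<in>?S. y \<in> LM.mball x r"
      unfolding LM.metric_closure_of by blast
    hence "\<exists>y\<in>?S. y \<in> LM.mball x (\<epsilon> / 2)"
      using \<open>0 < \<epsilon>\<close> by (meson half_gt_zero)
    thus ?thesis
      by auto
  qed
  define g1 where "g1 = (\<lambda>p. g0 p + g p)"
  have "g1 \<in> LipP"
    unfolding g1_def using LipP_add \<open>g0 \<in> LipP\<close> g by blast
  have "thdist g0 g1 = thnorm adj \<theta> (\<lambda>p. (-1) * g p)"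
    unfolding thdist_def g1_def using \<open>g1 \<in> LipP\<close> \<open>g0 \<in> LipP\<close> by (simp add: g1_def)
  also have "\<dots> = thnorm adj \<theta> g"
    using thnorm_mult[OF LipP_subset_Lip[OF g(1)], of "-1"] by simp
  finally have "g1 \<in> LM.mball g0 r"
    using \<open>g1 \<in> LipP\<close> \<open>g0 \<in> LipP\<close> g by simp
  then obtain f1 where f1: "f1 \<in> LipP" "thnorm adj \<theta> f1 \<le> k" "thdist g1 (shifted_T z f1) < \<epsilon> / 2"
    using approx by blast
  have "g0 \<in> LM.mball g0 r"
    using \<open>g0 \<in> LipP\<close> \<open>0 < r\<close> by simp
  then obtain f2 where f2: "f2 \<in> LipP" "thnorm adj \<theta> f2 \<le> k" "thdist g0 (shifted_T z f2) < \<epsilon> / 2"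
    using approx by blast
  define f where "f = (\<lambda>p. f1 p - f2 p)"
  have "f \<in> LipP"
    unfolding f_def using LipP_diff f1 f2 by blast
  have "thnorm adj \<theta> f \<le> thnorm adj \<theta> f1 + thnorm adj \<theta> f2"
    unfolding f_def using f1(1) f2(1) by (intro thnorm_diff LipP_subset_Lip)
  also have "\<dots> \<le> 2 * k"
    using f1 f2 by simp
  finally have "thnorm adj \<theta> f \<le> 2 * k" .
  have S: "shifted_T z f1 \<in> LipP" "shifted_T z f2 \<in> LipP"
    using shifted_T_in_LipP LipP_subset_Lip f1 f2 by auto
  have "(\<lambda>p. shifted_T z f p - g p) = (\<lambda>p. (shifted_T z f1 p - g1 p) + (g0 p - shifted_T z f2 p))"
    unfolding f_def g1_def by (simp add: shifted_T_diff fun_eq_iff algebra_simps)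
  hence "thnorm adj \<theta> (\<lambda>p. shifted_T z f p - g p) \<le>
      thnorm adj \<theta> (\<lambda>p. shifted_T z f1 p - g1 p) + thnorm adj \<theta> (\<lambda>p. g0 p - shifted_T z f2 p)"
    using thnorm_add[OF Lip_diff Lip_diff] S \<open>g1 \<in> LipP\<close> \<open>g0 \<in> LipP\<close> LipP_subset_Lip by simp
  also have "\<dots> = thdist g1 (shifted_T z f1) + thdist g0 (shifted_T z f2)"
    unfolding thdist_def using S \<open>g1 \<in> LipP\<close> \<open>g0 \<in> LipP\<close> thnorm_minus_commute LipP_subset_Lip by simp
  also have "\<dots> < \<epsilon>"
    using f1 f2 by simp
  finally show ?thesis
    using \<open>f \<in> LipP\<close> \<open>thnorm adj \<theta> f \<le> 2 * k\<close> by blast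
qed

lemma approx_by_shifted_T_homogeneous:
  assumes "0 < r"
    and small: "\<And>g \<epsilon>. g \<in> LipP \<Longrightarrow> thnorm adj \<theta> g < r \<Longrightarrow> 0 < \<epsilon> \<Longrightarrow>
       \<exists>f\<in>LipP. thnorm adj \<theta> f \<le> k \<and> thnorm adj \<theta> (\<lambda>p. shifted_T z f p - g p) < \<epsilon>"
    and g: "g \<in> LipP" "0 < thnorm adj \<theta> g" and "0 < \<epsilon>"
  shows "\<exists>f\<in>LipP. thnorm adj \<theta> f \<le> 2 * k / r * thnorm adj \<theta> g \<and>
           thnorm adj \<theta> (\<lambda>p. shifted_T z f p - g p) < \<epsilon>"
proof -
  define t where "t = thnorm adj \<theta> g"
  define c where "c = r / (2 * t)"
  have "0 < c"
    unfolding c_def t_def using g \<open>0 < r\<close> by simp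
  have cg: "(\<lambda>p. complex_of_real c * g p) \<in> LipP"
    using LipP_mult g by blast
  have "thnorm adj \<theta> (\<lambda>p. complex_of_real c * g p) = c * t"
    using thnorm_mult[OF LipP_subset_Lip[OF g(1)], of "complex_of_real c"] \<open>0 < c\<close>
    unfolding t_def by simp
  also have "\<dots> < r"
    unfolding c_def t_def using g \<open>0 < r\<close> by simp
  finally obtain f' where f': "f' \<in> LipP" "thnorm adj \<theta> f' \<le> k"
    "thnorm adj \<theta> (\<lambda>p. shifted_T z f' p - complex_of_real c * g p) < \<epsilon> * c"
    using small[OF cg, of "\<epsilon> * c"] \<open>0 < \<epsilon>\<close> \<open>0 < c\<close> by auto
  define f where "f = (\<lambda>p. complex_of_real (1 / c) * f' p)"
  have "f \<in> LipP"
    unfolding f_def using LipP_mult f' by blast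
  have "thnorm adj \<theta> f = norm (complex_of_real (1 / c)) * thnorm adj \<theta> f'"
    unfolding f_def by (rule thnorm_mult[OF LipP_subset_Lip[OF f'(1)]])
  also have "\<dots> \<le> k / c"
    using f' \<open>0 < c\<close> by (simp add: norm_divide divide_right_mono)
  also have "\<dots> = 2 * k / r * t"
    unfolding c_def t_def using g \<open>0 < r\<close> by (simp add: field_simps)
  finally have "thnorm adj \<theta> f \<le> 2 * k / r * thnorm adj \<theta> g"
    unfolding t_def .
  have "shifted_T z f p = complex_of_real (1 / c) * shifted_T z f' p" for p
    unfolding f_def by (rule shifted_T_mult)
  hence "(\<lambda>p. shifted_T z f p - g p) =
      (\<lambda>p. complex_of_real (1 / c) * (shifted_T z f' p - complex_of_real c * g p))"
    using \<open>0 < c\<close> by (simp add: fun_eq_iff right_diff_distrib)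
  hence "thnorm adj \<theta> (\<lambda>p. shifted_T z f p - g p) =
      norm (complex_of_real (1 / c)) * thnorm adj \<theta> (\<lambda>p. shifted_T z f' p - complex_of_real c * g p)"
    using thnorm_mult[OF LipP_subset_Lip[OF LipP_diff[OF shifted_T_in_LipP[OF LipP_subset_Lip[OF f'(1)]] cg]]]
    by (simp only:)
  also have "\<dots> < \<epsilon>"
    using f' \<open>0 < c\<close> by (simp add: norm_divide divide_less_eq)
  finally show ?thesis
    using \<open>f \<in> LipP\<close> \<open>thnorm adj \<theta> f \<le> 2 * k / r * thnorm adj \<theta> g\<close> by blast
qed

lemma shifted_T_almost_open:
  assumes surj: "\<And>g. g \<in> Lip adj \<theta> \<Longrightarrow> \<exists>f\<in>Lip adj \<theta>. \<forall>p\<in>P. z * f p - T f p = g p"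
  obtains K where "0 < K"
    "\<And>g \<epsilon>. g \<in> LipP \<Longrightarrow> 0 < \<epsilon> \<Longrightarrow>
       \<exists>f\<in>LipP. thnorm adj \<theta> f \<le> K * thnorm adj \<theta> g \<and> thnorm adj \<theta> (\<lambda>p. shifted_T z f p - g p) < \<epsilon>"
proof -
  obtain k :: nat and g0 r where r: "0 < r" "g0 \<in> LipP" and
    ball: "LM.mball g0 r \<subseteq>
             LM.mtopology closure_of {shifted_T z f |f. f \<in> LipP \<and> thnorm adj \<theta> f \<le> real k}"
    by (rule Baire_ball_in_closure_shifted_T[OF surj])
  define K where "K = 2 * (2 * real k) / r + 1"
  have "0 < K"
    unfolding K_def using r by (simp add: add_nonneg_pos)
  have "\<exists>f\<in>LipP. thnorm adj \<theta> f \<le> K * thnorm adj \<theta> g \<and> thnorm adj \<theta> (\<lambda>p. shifted_T z f p - g p) < \<epsilon>"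
    if g: "g \<in> LipP" and "0 < \<epsilon>" for g \<epsilon>
  proof (cases "thnorm adj \<theta> g = 0")
    case True
    have "thnorm adj \<theta> (\<lambda>p. shifted_T z (\<lambda>_. 0) p - g p) = thnorm adj \<theta> (\<lambda>p. (-1) * g p)"
      using shifted_T_mult[of z 0 "\<lambda>_. 0"] by simp
    also have "\<dots> = 0"
      using thnorm_mult[OF LipP_subset_Lip[OF g], of "-1"] True by simp
    finally show ?thesis
      using zero_in_LipP \<open>0 < \<epsilon>\<close> thnorm_zero True by (intro bexI[of _ "\<lambda>_. 0"]) auto
  next
    case False
    hence "0 < thnorm adj \<theta> g"
      using thnorm_nonneg[OF LipP_subset_Lip[OF g]] by simp
    then obtain f where "f \<in> LipP" "thnorm adj \<theta> f \<le> 2 * (2 * real k) / r * thnorm adj \<theta> g"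
      "thnorm adj \<theta> (\<lambda>p. shifted_T z f p - g p) < \<epsilon>"
      using approx_by_shifted_T_homogeneous[OF r(1) approx_near_zero_by_shifted_T[OF r ball] g]
        \<open>0 < \<epsilon>\<close> by blast
    moreover have "2 * (2 * real k) / r * thnorm adj \<theta> g \<le> K * thnorm adj \<theta> g"
      unfolding K_def using \<open>0 < thnorm adj \<theta> g\<close> by (simp add: distrib_right)
    ultimately show ?thesis
      by (meson order_trans)
  qed
  thus ?thesis
    using that \<open>0 < K\<close> by blast
qed

lemma approx_sequence:
  assumes approx: "\<And>g \<epsilon>. g \<in> LipP \<Longrightarrow> 0 < \<epsilon> \<Longrightarrow>
       \<exists>f\<in>LipP. thnorm adj \<theta> f \<le> K * thnorm adj \<theta> g \<and> thnorm adj \<theta> (\<lambda>p. shifted_T z f p - g p) < \<epsilon>"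
    and g: "g \<in> LipP" and t: "0 < thnorm adj \<theta> g"
  obtains G F where "G 0 = g" "\<And>n. G n \<in> LipP" "\<And>n. F n \<in> LipP"
    "\<And>n. thnorm adj \<theta> (G n) \<le> (1/2) ^ n * thnorm adj \<theta> g"
    "\<And>n. thnorm adj \<theta> (F n) \<le> K * thnorm adj \<theta> (G n)"
    "\<And>n p. G (Suc n) p = G n p - shifted_T z (F n) p"
proof -
  define t where "t = thnorm adj \<theta> g"
  define invariant where "invariant n s \<longleftrightarrow> fst s \<in> LipP \<and> snd s \<in> LipP \<and>
      thnorm adj \<theta> (fst s) \<le> (1/2) ^ n * t \<and> thnorm adj \<theta> (snd s) \<le> K * thnorm adj \<theta> (fst s) \<and>
      thnorm adj \<theta> (\<lambda>p. shifted_T z (snd s) p - fst s p) \<le> (1/2) ^ Suc n * t \<and> (n = 0 \<longrightarrow> fst s = g)"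
    for n and s :: "('v path \<Rightarrow> complex) \<times> ('v path \<Rightarrow> complex)"
  define step where "step n s s' \<longleftrightarrow> fst s' = (\<lambda>p. fst s p - shifted_T z (snd s) p)"
    for n :: nat and s s' :: "('v path \<Rightarrow> complex) \<times> ('v path \<Rightarrow> complex)"
  have "\<exists>s. invariant 0 s"
  proof -
    obtain f where "f \<in> LipP" "thnorm adj \<theta> f \<le> K * thnorm adj \<theta> g"
      "thnorm adj \<theta> (\<lambda>p. shifted_T z f p - g p) < t / 2"
      using approx g t unfolding t_def by (meson half_gt_zero)
    thus ?thesis
      unfolding invariant_def t_def using g by (intro exI[of _ "(g, f)"]) auto
  qed
  moreover have "\<exists>s'. invariant (Suc n) s' \<and> step n s s'" if "invariant n s" for n s
  proof -
    define g' where "g' = (\<lambda>p. fst s p - shifted_T z (snd s) p)"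
    have "g' \<in> LipP"
      unfolding g'_def using that LipP_diff shifted_T_in_LipP LipP_subset_Lip
      unfolding invariant_def by blast
    have "thnorm adj \<theta> g' = thnorm adj \<theta> (\<lambda>p. shifted_T z (snd s) p - fst s p)"
      unfolding g'_def using that shifted_T_in_LipP LipP_subset_Lip
      by (intro thnorm_minus_commute) (auto simp: invariant_def)
    hence "thnorm adj \<theta> g' \<le> (1/2) ^ Suc n * t"
      using that unfolding invariant_def by simp
    moreover obtain f where "f \<in> LipP" "thnorm adj \<theta> f \<le> K * thnorm adj \<theta> g'"
      "thnorm adj \<theta> (\<lambda>p. shifted_T z f p - g' p) < (1/2) ^ Suc (Suc n) * t"
      using approx[OF \<open>g' \<in> LipP\<close>, of "(1/2) ^ Suc (Suc n) * t"] t unfolding t_def by auto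
    ultimately show ?thesis
      unfolding invariant_def step_def using \<open>g' \<in> LipP\<close> by (intro exI[of _ "(g', f)"]) (auto simp: g'_def)
  qed
  ultimately obtain s where s: "\<And>n. invariant n (s n) \<and> step n (s n) (s (Suc n))"
    using dependent_nat_choice[of invariant step] by blast
  show ?thesis
    using that[of "fst \<circ> s" "snd \<circ> s"] s unfolding invariant_def step_def t_def by auto
qed

lemma shifted_T_telescoping_suminf:
  assumes summable: "\<And>p. p \<in> P \<Longrightarrow> summable (\<lambda>n. F n p)"
    and G_Suc: "\<And>n p. G (Suc n) p = G n p - shifted_T z (F n) p"
    and "(\<lambda>n. G n p) \<longlonglongrightarrow> 0" and p: "p \<in> P"
  shows "z * (\<Sum>n. F n p) - T (\<lambda>p. \<Sum>n. F n p) p = G 0 p"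
proof -
  have "(\<lambda>n. T (F n) p) sums T (\<lambda>p. \<Sum>n. F n p) p"
    using Tr_suminf[OF summable p] by (simp add: summable_sums)
  hence "(\<lambda>n. z * F n p - T (F n) p) sums (z * (\<Sum>n. F n p) - T (\<lambda>p. \<Sum>n. F n p) p)"
    by (intro sums_diff sums_mult summable_sums summable p)
  moreover have "(\<lambda>n. z * F n p - T (F n) p) = (\<lambda>n. G n p - G (Suc n) p)"
    using p by (simp add: G_Suc shifted_T_def fun_eq_iff)
  moreover have "(\<lambda>n. G n p - G (Suc n) p) sums (G 0 p - 0)"
    using \<open>(\<lambda>n. G n p) \<longlonglongrightarrow> 0\<close> by (rule telescope_sums')
  ultimately show ?thesis
    by (simp add: sums_iff)
qed

lemma shifted_T_solution_bound:
  assumes "0 < K"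
    and approx: "\<And>g \<epsilon>. g \<in> LipP \<Longrightarrow> 0 < \<epsilon> \<Longrightarrow>
       \<exists>f\<in>LipP. thnorm adj \<theta> f \<le> K * thnorm adj \<theta> g \<and> thnorm adj \<theta> (\<lambda>p. shifted_T z f p - g p) < \<epsilon>"
    and g: "g \<in> LipP"
  obtains f where "f \<in> Lip adj \<theta>" "\<And>p. p \<in> P \<Longrightarrow> z * f p - T f p = g p"
    "thnorm adj \<theta> f \<le> 4 * K * thnorm adj \<theta> g"
proof (cases "thnorm adj \<theta> g = 0")
  case True
  have "z * 0 - T (\<lambda>_. 0) p = g p" if "p \<in> P" for p
    using vanishes_if_thnorm_eq_0[OF LipP_subset_Lip[OF g] True that] by (simp add: Tr_eq_sum_preds)
  thus ?thesis
    using that[of "\<lambda>_. 0"] zero_in_Lip thnorm_zero True by simp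
next
  case False
  define t where "t = thnorm adj \<theta> g"
  have "0 < t"
    using False thnorm_nonneg[OF LipP_subset_Lip[OF g]] unfolding t_def by simp
  obtain G F where G0: "G 0 = g" and G: "\<And>n. G n \<in> LipP" and F: "\<And>n. F n \<in> LipP"
    and G_le: "\<And>n. thnorm adj \<theta> (G n) \<le> (1/2) ^ n * t"
    and F_le: "\<And>n. thnorm adj \<theta> (F n) \<le> K * thnorm adj \<theta> (G n)"
    and G_Suc: "\<And>n p. G (Suc n) p = G n p - shifted_T z (F n) p"
    using approx_sequence[OF approx g] \<open>0 < t\<close> unfolding t_def by metis
  define b where "b n = K * t * (1/2) ^ n" for n
  have "thnorm adj \<theta> (F n) \<le> b n" for n
    using F_le[of n] G_le[of n] \<open>0 < K\<close> unfolding b_def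
    by (smt (verit) mult.commute mult.left_commute mult_left_mono)
  moreover have "summable b"
    unfolding b_def by (intro summable_mult summable_geometric) simp
  moreover have "suminf b = 2 * K * t"
    unfolding b_def using suminf_mult[of "\<lambda>n. (1/2::real) ^ n" "K * t"] suminf_geometric[of "1/2::real"]
    by (simp add: summable_geometric)
  moreover have "F n \<in> Lip adj \<theta>" for n
    using F LipP_subset_Lip by blast
  ultimately have summable: "\<And>p. p \<in> P \<Longrightarrow> summable (\<lambda>n. F n p)"
    and sum_Lip: "(\<lambda>p. \<Sum>n. F n p) \<in> Lip adj \<theta>"
    and sum_le: "thnorm adj \<theta> (\<lambda>p. \<Sum>n. F n p) \<le> 4 * K * t"
    using Lip_suminf[of F b] by auto
  have "z * (\<Sum>n. F n p) - T (\<lambda>p. \<Sum>n. F n p) p = g p" if p: "p \<in> P" for p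
  proof -
    have "(\<lambda>n. G n p) \<longlonglongrightarrow> 0"
    proof (rule Lim_null_comparison)
      have "norm (G n p) \<le> (1/2) ^ n * t" for n
        using norm_le_thnorm[OF LipP_subset_Lip[OF G] p] G_le by (rule order_trans)
      thus "\<forall>\<^sub>F n in sequentially. norm (G n p) \<le> (1/2) ^ n * t"
        by simp
      show "(\<lambda>n. (1/2::real) ^ n * t) \<longlonglongrightarrow> 0"
        using tendsto_mult_left_zero[OF LIMSEQ_power_zero[of "1/2::real"]] by simp
    qed
    thus ?thesis
      using shifted_T_telescoping_suminf[OF summable G_Suc _ p] G0 by simp
  qed
  thus ?thesis
    using that sum_Lip sum_le unfolding t_def by blast
qed

lemma bounded_inverse:
  assumes "z \<notin> spectrum_Lip adj \<theta>"
  obtains K where "0 < K"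
    "\<And>f g. f \<in> Lip adj \<theta> \<Longrightarrow> g \<in> Lip adj \<theta> \<Longrightarrow> \<forall>p\<in>P. z * f p - T f p = g p \<Longrightarrow>
       supnorm adj f \<le> K * thnorm adj \<theta> g"
proof -
  obtain K where "0 < K" and approx: "\<And>g \<epsilon>. g \<in> LipP \<Longrightarrow> 0 < \<epsilon> \<Longrightarrow>
      \<exists>f\<in>LipP. thnorm adj \<theta> f \<le> K * thnorm adj \<theta> g \<and> thnorm adj \<theta> (\<lambda>p. shifted_T z f p - g p) < \<epsilon>"
    using shifted_T_almost_open[OF notin_spectrum_LipD(2)[OF assms]] by blast
  have "supnorm adj f \<le> 4 * K * thnorm adj \<theta> g"
    if f: "f \<in> Lip adj \<theta>" and g: "g \<in> Lip adj \<theta>" and eq: "\<forall>p\<in>P. z * f p - T f p = g p" for f g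
  proof -
    obtain F where F: "F \<in> Lip adj \<theta>" "\<And>p. p \<in> P \<Longrightarrow> z * F p - T F p = restrict_paths g p"
      "thnorm adj \<theta> F \<le> 4 * K * thnorm adj \<theta> (restrict_paths g)"
      using shifted_T_solution_bound[OF \<open>0 < K\<close> approx restrict_paths_in_LipP[OF g]] by blast
    have "\<forall>p\<in>P. z * (f p - F p) - T (\<lambda>p. f p - F p) p = 0"
      using eq F(2) by (simp add: Tr_diff restrict_paths_def algebra_simps)
    hence "\<forall>p\<in>P. f p - F p = 0"
      using notin_spectrum_LipD(1)[OF assms Lip_diff[OF f F(1)]] by blast
    hence "supnorm adj f = supnorm adj F"
      by (intro supnorm_cong) simp
    also have "\<dots> \<le> thnorm adj \<theta> F"
      by (rule supnorm_le_thnorm[OF F(1)])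
    also have "\<dots> \<le> 4 * K * thnorm adj \<theta> g"
      using F(3) by (simp add: thnorm_restrict_paths)
    finally show ?thesis .
  qed
  thus ?thesis
    using that[of "4 * K"] \<open>0 < K\<close> by simp
qed

end

section \<open>The spectral radius rho lies in the spectrum\<close>

context bounded_degree_graph
begin

definition edge_op :: "('v edge \<Rightarrow> real) \<Rightarrow> 'v edge \<Rightarrow> real" where
  "edge_op u e = (\<Sum>e0\<in>preds e. u e0)"

lemma edge_op_nonneg: "(\<And>e. e \<in> edges adj \<Longrightarrow> 0 \<le> u e) \<Longrightarrow> 0 \<le> edge_op u e"
  unfolding edge_op_def using preds_subset_edges by (intro sum_nonneg) blast

lemma edge_op_pow_nonneg:
  "(\<And>e. e \<in> edges adj \<Longrightarrow> 0 \<le> u e) \<Longrightarrow> e \<in> edges adj \<Longrightarrow> 0 \<le> (edge_op ^^ n) u e"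
proof (induction n arbitrary: e)
  case 0
  thus ?case by simp
next
  case (Suc n)
  thus ?case by (simp add: edge_op_nonneg)
qed

lemma abs_edge_op_pow_le:
  assumes "\<forall>e\<in>edges adj. \<bar>u e\<bar> \<le> M" and "e \<in> edges adj"
  shows "\<bar>(edge_op ^^ n) u e\<bar> \<le> real (Ncount adj n e) * M"
  using assms(2)
proof (induction n arbitrary: e)
  case 0
  thus ?case using assms(1) by (simp add: Ncount_0)
next
  case (Suc n)
  have "\<bar>(edge_op ^^ Suc n) u e\<bar> \<le> (\<Sum>e0\<in>preds e. \<bar>(edge_op ^^ n) u e0\<bar>)"
    by (simp add: edge_op_def sum_abs)
  also have "\<dots> \<le> (\<Sum>e0\<in>preds e. real (Ncount adj n e0) * M)"
    using Suc.IH preds_subset_edges by (intro sum_mono) blast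
  also have "\<dots> = real (Ncount adj (Suc n) e) * M"
    by (simp add: Ncount_Suc Suc.prems sum_distrib_right)
  finally show ?case .
qed

text \<open>For l > rho this is the resolvent (l - A)^-1 of the edge operator A, as a Neumann series.\<close>

definition edge_resolvent :: "real \<Rightarrow> ('v edge \<Rightarrow> real) \<Rightarrow> 'v edge \<Rightarrow> real" where
  "edge_resolvent l u e = (\<Sum>n. (edge_op ^^ n) u e / l ^ Suc n)"

lemma edge_resolvent_term_le:
  assumes "rho < l" and "\<forall>e\<in>edges adj. \<bar>u e\<bar> \<le> M" and "e \<in> edges adj"
  shows "norm ((edge_op ^^ n) u e / l ^ Suc n) \<le> M * (real (Rn adj n) / l ^ Suc n)"
proof -
  have "0 \<le> M"
    using assms(2,3) by (meson abs_ge_zero order_trans)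
  have "0 < l"
    using assms(1) rho_ge_1 by linarith
  have "\<bar>(edge_op ^^ n) u e\<bar> \<le> real (Ncount adj n e) * M"
    by (rule abs_edge_op_pow_le[OF assms(2,3)])
  also have "\<dots> \<le> real (Rn adj n) * M"
    using Ncount_le_Rn[OF assms(3)] \<open>0 \<le> M\<close> by (intro mult_right_mono) auto
  finally show ?thesis
    using \<open>0 < l\<close> by (simp add: abs_divide divide_right_mono mult.commute)
qed

lemma summable_edge_resolvent:
  assumes "rho < l" and "\<forall>e\<in>edges adj. \<bar>u e\<bar> \<le> M" and "e \<in> edges adj"
  shows "summable (\<lambda>n. (edge_op ^^ n) u e / l ^ Suc n)"
  using summable_mult[OF summable_Rn_div_power_Suc[OF assms(1)], of M] edge_resolvent_term_le[OF assms]
  by (rule summable_comparison_test')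

lemma abs_edge_resolvent_le:
  assumes "rho < l" and "\<forall>e\<in>edges adj. \<bar>u e\<bar> \<le> M" and "e \<in> edges adj"
  shows "\<bar>edge_resolvent l u e\<bar> \<le> M * (\<Sum>n. real (Rn adj n) / l ^ Suc n)"
  using norm_suminf_le[OF edge_resolvent_term_le[OF assms] summable_mult[OF summable_Rn_div_power_Suc[OF assms(1)]]]
  unfolding edge_resolvent_def suminf_mult[OF summable_Rn_div_power_Suc[OF assms(1)]] by simp

lemma edge_resolvent_nonneg:
  assumes "rho < l" and "\<forall>e\<in>edges adj. \<bar>u e\<bar> \<le> M" and "\<And>e. e \<in> edges adj \<Longrightarrow> 0 \<le> u e"
    and "e \<in> edges adj"
  shows "0 \<le> edge_resolvent l u e"
  unfolding edge_resolvent_def using summable_edge_resolvent[OF assms(1,2,4)] assms rho_ge_1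
  by (intro suminf_nonneg) (auto intro!: divide_nonneg_pos edge_op_pow_nonneg)

lemma edge_resolvent_eq:
  assumes l: "rho < l" and u: "\<forall>e\<in>edges adj. \<bar>u e\<bar> \<le> M" and e: "e \<in> edges adj"
  shows "l * edge_resolvent l u e - edge_op (edge_resolvent l u) e = u e"
proof -
  have "0 < l"
    using l rho_ge_1 by linarith
  have "edge_op (edge_resolvent l u) e = (\<Sum>e0\<in>preds e. \<Sum>n. (edge_op ^^ n) u e0 / l ^ Suc n)"
    unfolding edge_op_def edge_resolvent_def ..
  also have "\<dots> = (\<Sum>n. \<Sum>e0\<in>preds e. (edge_op ^^ n) u e0 / l ^ Suc n)"
    using summable_edge_resolvent[OF l u] preds_subset_edges by (intro suminf_sum[symmetric]) blast
  also have "\<dots> = (\<Sum>n. (edge_op ^^ Suc n) u e / l ^ Suc n)"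
    by (simp add: edge_op_def sum_divide_distrib)
  finally have A: "edge_op (edge_resolvent l u) e = (\<Sum>n. (edge_op ^^ Suc n) u e / l ^ Suc n)" .
  define a where "a n = (edge_op ^^ n) u e / l ^ n" for n
  have la: "(\<lambda>n. l * ((edge_op ^^ n) u e / l ^ Suc n)) = a"
    unfolding a_def using \<open>0 < l\<close> by (auto simp: fun_eq_iff)
  hence "summable a"
    using summable_mult[OF summable_edge_resolvent[OF l u e], of l] by simp
  have "l * edge_resolvent l u e = suminf a"
    unfolding edge_resolvent_def using suminf_mult[OF summable_edge_resolvent[OF l u e], of l] la by simp
  also have "\<dots> = a 0 + (\<Sum>n. a (Suc n))"
    using suminf_split_head[OF \<open>summable a\<close>] by simp
  also have "\<dots> = u e + edge_op (edge_resolvent l u) e"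
    unfolding A a_def by simp
  finally show ?thesis
    by simp
qed

lemma edge_resolvent_iterates_bound:
  assumes l: "rho < l"
    and bound: "\<And>u M e. \<forall>e'\<in>edges adj. \<bar>u e'\<bar> \<le> M \<Longrightarrow> e \<in> edges adj \<Longrightarrow> \<bar>edge_resolvent l u e\<bar> \<le> C * M"
    and "e \<in> edges adj"
  shows "0 \<le> (edge_resolvent l ^^ k) (\<lambda>_. 1) e \<and> (edge_resolvent l ^^ k) (\<lambda>_. 1) e \<le> C ^ k"
  using assms(3)
proof (induction k arbitrary: e)
  case 0
  thus ?case by simp
next
  case (Suc k)
  have bounded: "\<forall>e\<in>edges adj. \<bar>(edge_resolvent l ^^ k) (\<lambda>_. 1) e\<bar> \<le> C ^ k"
    using Suc.IH by fastforce
  have "0 \<le> edge_resolvent l ((edge_resolvent l ^^ k) (\<lambda>_. 1)) e"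
    using edge_resolvent_nonneg[OF l bounded _ Suc.prems] Suc.IH by blast
  moreover have "\<bar>edge_resolvent l ((edge_resolvent l ^^ k) (\<lambda>_. 1)) e\<bar> \<le> C * C ^ k"
    by (rule bound[OF bounded Suc.prems])
  ultimately show ?case
    by simp
qed

lemma edge_op_shifted_power_series:
  assumes U_eq: "\<And>k e. e \<in> edges adj \<Longrightarrow> l * U (Suc k) e - edge_op (U (Suc k)) e = U k e"
    and s1: "\<And>e. e \<in> edges adj \<Longrightarrow> summable (\<lambda>k. x ^ k * U (Suc k) e)"
    and s0: "summable (\<lambda>k. x ^ k * U k e)" and e: "e \<in> edges adj"
  shows "edge_op (\<lambda>e. \<Sum>k. x ^ k * U (Suc k) e) e = (l - x) * (\<Sum>k. x ^ k * U (Suc k) e) - U 0 e"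
proof -
  have "edge_op (\<lambda>e. \<Sum>k. x ^ k * U (Suc k) e) e = (\<Sum>e0\<in>preds e. \<Sum>k. x ^ k * U (Suc k) e0)"
    unfolding edge_op_def ..
  also have "\<dots> = (\<Sum>k. \<Sum>e0\<in>preds e. x ^ k * U (Suc k) e0)"
    using s1 preds_subset_edges by (intro suminf_sum[symmetric]) blast
  also have "\<dots> = (\<Sum>k. x ^ k * edge_op (U (Suc k)) e)"
    by (simp add: edge_op_def sum_distrib_left)
  also have "\<dots> = (\<Sum>k. l * (x ^ k * U (Suc k) e) - x ^ k * U k e)"
  proof (intro arg_cong[where f=suminf] ext)
    fix k
    have A: "edge_op (U (Suc k)) e = l * U (Suc k) e - U k e"
      using U_eq[OF e, of k] by linarith
    show "x ^ k * edge_op (U (Suc k)) e = l * (x ^ k * U (Suc k) e) - x ^ k * U k e"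
      unfolding A by (simp add: algebra_simps)
  qed
  also have "\<dots> = l * (\<Sum>k. x ^ k * U (Suc k) e) - (\<Sum>k. x ^ k * U k e)"
    using s1[OF e] s0 by (simp add: suminf_diff[symmetric] suminf_mult summable_mult)
  also have "(\<Sum>k. x ^ k * U k e) = U 0 e + x * (\<Sum>k. x ^ k * U (Suc k) e)"
    using suminf_split_head[OF s0] suminf_mult[OF s1[OF e], of x] by (simp add: mult_ac)
  finally show ?thesis
    by (simp add: algebra_simps)
qed

text \<open>Taylor expansion of the resolvent around l: a bound C on (l - A)^-1 yields the nonnegative
  solution w = sum x^k (l - A)^-(k+1) 1 of (l - x - A) w = 1.\<close>

lemma nonneg_solution_below:
  assumes l: "rho < l" and "0 < x" "C * x \<le> 1/2"
    and bound: "\<And>u M e. \<forall>e'\<in>edges adj. \<bar>u e'\<bar> \<le> M \<Longrightarrow> e \<in> edges adj \<Longrightarrow> \<bar>edge_resolvent l u e\<bar> \<le> C * M"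
  obtains w where "\<And>e. e \<in> edges adj \<Longrightarrow> 0 \<le> w e" "\<And>e. e \<in> edges adj \<Longrightarrow> w e \<le> 2 * C"
    "\<And>e. e \<in> edges adj \<Longrightarrow> edge_op w e = (l - x) * w e - 1"
proof -
  define U where "U k = (edge_resolvent l ^^ k) (\<lambda>_. 1)" for k
  have U: "0 \<le> U k e" "U k e \<le> C ^ k" if "e \<in> edges adj" for k e
    unfolding U_def using edge_resolvent_iterates_bound[OF l bound that] by auto
  have "0 \<le> C"
    using U(2)[of _ 1] edges_nonempty U(1)[of _ 1] by fastforce
  have U_eq: "l * U (Suc k) e - edge_op (U (Suc k)) e = U k e" if "e \<in> edges adj" for k e
    using edge_resolvent_eq[OF l _ that, of "U k" "C ^ k"] U by (simp add: U_def)
  have s0: "summable (\<lambda>k. x ^ k * U k e)" if "e \<in> edges adj" for e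
    using summable_geometric_bound(1)[of "\<lambda>k. U k e" 1 C x] U[OF that] assms \<open>0 \<le> C\<close> by simp
  have s1: "summable (\<lambda>k. x ^ k * U (Suc k) e)"
    and "(\<Sum>k. x ^ k * U (Suc k) e) \<le> 2 * C" if "e \<in> edges adj" for e
  proof -
    have "U (Suc k) e \<le> C * C ^ k" for k
      using U(2)[OF that, of "Suc k"] by simp
    thus "summable (\<lambda>k. x ^ k * U (Suc k) e)" "(\<Sum>k. x ^ k * U (Suc k) e) \<le> 2 * C"
      using summable_geometric_bound[of "\<lambda>k. U (Suc k) e" C C x] U(1)[OF that] assms(2,3) \<open>0 \<le> C\<close>
      by simp_all
  qed
  define w where "w = (\<lambda>e. \<Sum>k. x ^ k * U (Suc k) e)"
  show ?thesis
  proof (rule that)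
    fix e assume e: "e \<in> edges adj"
    show "0 \<le> w e"
      unfolding w_def using s1[OF e] U[OF e] \<open>0 < x\<close> by (intro suminf_nonneg) auto
    show "w e \<le> 2 * C"
      unfolding w_def using \<open>e \<in> edges adj \<Longrightarrow> (\<Sum>k. x ^ k * U (Suc k) e) \<le> 2 * C\<close> e by simp
    show "edge_op w e = (l - x) * w e - 1"
      unfolding w_def using edge_op_shifted_power_series[OF U_eq s1 s0[OF e] e] by (simp add: U_def)
  qed
qed

lemma Ncount_le_of_subsolution:
  assumes "0 < \<mu>" and w: "\<And>e. e \<in> edges adj \<Longrightarrow> 0 \<le> w e"
    "\<And>e. e \<in> edges adj \<Longrightarrow> edge_op w e = \<mu> * w e - 1"
    and "e \<in> edges adj"
  shows "real (Ncount adj n e) \<le> \<mu> ^ Suc n * w e"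
  using assms(4)
proof (induction n arbitrary: e)
  case 0
  thus ?case
    using edge_op_nonneg[of w e] w by (simp add: Ncount_0)
next
  case (Suc n)
  have "real (Ncount adj (Suc n) e) = (\<Sum>e0\<in>preds e. real (Ncount adj n e0))"
    by (simp add: Ncount_Suc Suc.prems)
  also have "\<dots> \<le> (\<Sum>e0\<in>preds e. \<mu> ^ Suc n * w e0)"
    using Suc.IH preds_subset_edges by (intro sum_mono) blast
  also have "\<dots> = \<mu> ^ Suc n * edge_op w e"
    by (simp add: edge_op_def sum_distrib_left)
  also have "\<dots> \<le> \<mu> ^ Suc n * (\<mu> * w e)"
    using w(2)[OF Suc.prems] \<open>0 < \<mu>\<close> by (intro mult_left_mono) auto
  finally show ?case
    by (simp add: mult_ac)
qed

lemma rho_le_of_subsolution: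
  assumes "0 < \<mu>" and w: "\<And>e. e \<in> edges adj \<Longrightarrow> 0 \<le> w e" "\<And>e. e \<in> edges adj \<Longrightarrow> w e \<le> B"
    "\<And>e. e \<in> edges adj \<Longrightarrow> edge_op w e = \<mu> * w e - 1"
  shows "rho \<le> \<mu>"
proof -
  have Rn_le: "real (Rn adj n) \<le> \<mu> * B * \<mu> ^ n" for n
  proof -
    obtain e where e: "e \<in> edges adj" "Rn adj n = Ncount adj n e"
      using Rn_attained by blast
    have "real (Rn adj n) \<le> \<mu> ^ Suc n * w e"
      using Ncount_le_of_subsolution[OF \<open>0 < \<mu>\<close> w(1,3) e(1)] e(2) by simp
    also have "\<dots> \<le> \<mu> ^ Suc n * B"
      using w(2)[OF e(1)] \<open>0 < \<mu>\<close> by (intro mult_left_mono) auto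
    finally show ?thesis
      by (simp add: mult_ac)
  qed
  moreover have "0 < \<mu> * B"
    using Rn_le[of 0] Rn_pos[of 0] by simp
  ultimately show ?thesis
    using rho_le_of_Rn_bound[OF \<open>0 < \<mu>\<close>] by blast
qed

end

context lip_space
begin

definition lift_edge_fun :: "('v edge \<Rightarrow> real) \<Rightarrow> 'v path \<Rightarrow> complex" where
  "lift_edge_fun u p = complex_of_real (u (p 0))"

lemma Tr_lift_edge_fun: "T (lift_edge_fun u) p = lift_edge_fun (edge_op u) p"
  unfolding Tr_eq_sum_preds lift_edge_fun_def edge_op_def by simp

lemma lift_edge_fun_Lip:
  assumes "\<forall>e\<in>edges adj. \<bar>u e\<bar> \<le> M"
  shows "lift_edge_fun u \<in> Lip adj \<theta>" and "thnorm adj \<theta> (lift_edge_fun u) \<le> M"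
proof -
  have norm_le: "norm (lift_edge_fun u p) \<le> M" if "p \<in> P" for p
    using assms paths_edge[OF that] by (simp add: lift_edge_fun_def)
  have diff_le: "norm (lift_edge_fun u p - lift_edge_fun u p') \<le> 0 * d p p'"
    if "p \<in> P" "p' \<in> P" "p 0 = p' 0" for p p'
    using that by (simp add: lift_edge_fun_def)
  show "lift_edge_fun u \<in> Lip adj \<theta>"
    by (rule Lip_of_bounds(1)[OF norm_le diff_le order_refl])
  show "thnorm adj \<theta> (lift_edge_fun u) \<le> M"
    using Lip_of_bounds(2)[OF norm_le diff_le order_refl] by (simp only: add_0_right)
qed

lemma abs_le_supnorm_lift_edge_fun:
  assumes "\<forall>e\<in>edges adj. \<bar>u e\<bar> \<le> M" and "e \<in> edges adj"
  shows "\<bar>u e\<bar> \<le> supnorm adj (lift_edge_fun u)"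
proof -
  obtain p where "p \<in> P" "p 0 = e"
    using path_through_edge[OF assms(2)] by blast
  moreover have "path_bounded (lift_edge_fun u)"
    using lift_edge_fun_Lip(1)[OF assms(1)] by (simp add: Lip_iff)
  ultimately show ?thesis
    using norm_le_supnorm[of "lift_edge_fun u" p] by (simp add: lift_edge_fun_def)
qed

text \<open>A bounded inverse of rho - T bounds the resolvent at points l slightly above rho uniformly:
  (rho - A) v = u + (rho - l) v for v = (l - A)^-1 u.\<close>

lemma abs_edge_resolvent_le_of_bounded_inverse:
  assumes "0 < K"
    and inv_bound: "\<And>f g. f \<in> Lip adj \<theta> \<Longrightarrow> g \<in> Lip adj \<theta> \<Longrightarrow>
          \<forall>p\<in>P. complex_of_real rho * f p - T f p = g p \<Longrightarrow> supnorm adj f \<le> K * thnorm adj \<theta> g"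
    and l: "rho < l" "(l - rho) * K \<le> 1/2"
    and u: "\<forall>e\<in>edges adj. \<bar>u e\<bar> \<le> M" and e: "e \<in> edges adj"
  shows "\<bar>edge_resolvent l u e\<bar> \<le> 2 * K * M"
proof -
  define v where "v = edge_resolvent l u"
  have v_bounded: "\<forall>e\<in>edges adj. \<bar>v e\<bar> \<le> M * (\<Sum>n. real (Rn adj n) / l ^ Suc n)"
    unfolding v_def using abs_edge_resolvent_le[OF l(1) u] by blast
  define sv where "sv = supnorm adj (lift_edge_fun v)"
  have v_le: "\<bar>v e\<bar> \<le> sv" if "e \<in> edges adj" for e
    unfolding sv_def by (rule abs_le_supnorm_lift_edge_fun[OF v_bounded that])
  hence "0 \<le> sv"
    using e by (meson abs_ge_zero order_trans)
  define w where "w e = u e + (rho - l) * v e" for e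
  have w_bounded: "\<forall>e\<in>edges adj. \<bar>w e\<bar> \<le> M + (l - rho) * sv"
  proof
    fix e assume "e \<in> edges adj"
    have "\<bar>w e\<bar> \<le> \<bar>u e\<bar> + \<bar>rho - l\<bar> * \<bar>v e\<bar>"
      unfolding w_def by (metis abs_mult abs_triangle_ineq)
    also have "\<dots> \<le> M + (l - rho) * sv"
      using u \<open>e \<in> edges adj\<close> v_le[OF \<open>e \<in> edges adj\<close>] l by (intro add_mono mult_mono) auto
    finally show "\<bar>w e\<bar> \<le> M + (l - rho) * sv" .
  qed
  have "complex_of_real rho * lift_edge_fun v p - T (lift_edge_fun v) p = lift_edge_fun w p"
    if "p \<in> P" for p
  proof -
    have "l * v (p 0) - edge_op v (p 0) = u (p 0)"
      unfolding v_def by (rule edge_resolvent_eq[OF l(1) u paths_edge[OF that]])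
    hence "rho * v (p 0) - edge_op v (p 0) = w (p 0)"
      unfolding w_def by (simp add: algebra_simps)
    thus ?thesis
      unfolding Tr_lift_edge_fun lift_edge_fun_def by (simp flip: of_real_mult of_real_diff)
  qed
  hence "sv \<le> K * thnorm adj \<theta> (lift_edge_fun w)"
    unfolding sv_def using inv_bound lift_edge_fun_Lip(1)[OF v_bounded] lift_edge_fun_Lip(1)[OF w_bounded]
    by blast
  also have "\<dots> \<le> K * (M + (l - rho) * sv)"
    using \<open>0 < K\<close> lift_edge_fun_Lip(2)[OF w_bounded] by (intro mult_left_mono) auto
  also have "\<dots> = K * M + ((l - rho) * K) * sv"
    by (simp add: algebra_simps)
  also have "\<dots> \<le> K * M + (1/2) * sv"
    using l(2) \<open>0 \<le> sv\<close> by (intro add_left_mono mult_right_mono) auto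
  finally have "sv \<le> 2 * K * M"
    by simp
  thus ?thesis
    using v_le[OF e] unfolding v_def by simp
qed

theorem rho_in_spectrum: "complex_of_real rho \<in> spectrum_Lip adj \<theta>"
proof (rule ccontr)
  assume "complex_of_real rho \<notin> spectrum_Lip adj \<theta>"
  then obtain K where "0 < K" and inv_bound: "\<And>f g. f \<in> Lip adj \<theta> \<Longrightarrow> g \<in> Lip adj \<theta> \<Longrightarrow>
      \<forall>p\<in>P. complex_of_real rho * f p - T f p = g p \<Longrightarrow> supnorm adj f \<le> K * thnorm adj \<theta> g"
    using bounded_inverse by blast
  define x where "x = min (1 / (4 * K)) (rho / 2)"
  define l where "l = rho + x / 2"
  have "0 < x" "x \<le> rho / 2" "K * x \<le> 1/4"
    unfolding x_def using \<open>0 < K\<close> rho_ge_1 by (auto simp: min_def field_simps)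
  have "rho < l"
    unfolding l_def using \<open>0 < x\<close> by simp
  have "(l - rho) * K \<le> 1/2"
    unfolding l_def using \<open>K * x \<le> 1/4\<close> by (simp add: algebra_simps)
  hence "\<bar>edge_resolvent l u e\<bar> \<le> 2 * K * M"
    if "\<forall>e\<in>edges adj. \<bar>u e\<bar> \<le> M" "e \<in> edges adj" for u M e
    using abs_edge_resolvent_le_of_bounded_inverse[OF \<open>0 < K\<close> inv_bound \<open>rho < l\<close>] that by blast
  moreover have "2 * K * x \<le> 1/2"
    using \<open>K * x \<le> 1/4\<close> by simp
  ultimately obtain w where "\<And>e. e \<in> edges adj \<Longrightarrow> 0 \<le> w e"
    "\<And>e. e \<in> edges adj \<Longrightarrow> w e \<le> 2 * (2 * K)"
    "\<And>e. e \<in> edges adj \<Longrightarrow> edge_op w e = (l - x) * w e - 1"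
    using nonneg_solution_below[OF \<open>rho < l\<close> \<open>0 < x\<close>] by blast
  moreover have "0 < l - x"
    unfolding l_def using \<open>x \<le> rho / 2\<close> rho_ge_1 by simp
  ultimately have "rho \<le> l - x"
    by (rule rho_le_of_subsolution[rotated])
  thus False
    unfolding l_def using \<open>0 < x\<close> by simp
qed

lemma spectral_radius_Lip_eq_rho: "spectral_radius_Lip adj \<theta> = rho"
  unfolding spectral_radius_Lip_def
proof (rule cSup_eq_maximum)
  show "rho \<in> norm ` spectrum_Lip adj \<theta>"
    using rho_in_spectrum rho_ge_1 by (intro image_eqI[of _ _ "complex_of_real rho"]) auto
  show "y \<le> rho" if "y \<in> norm ` spectrum_Lip adj \<theta>" for y
    using that notin_spectrum_if_norm_gt_rho by force
qed

end

theorem mainTheorem6: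
  fixes adj :: "'v \<Rightarrow> 'v \<Rightarrow> bool" and \<theta> :: real
  assumes "graph_ok adj"
    and "\<forall>v. deg adj v \<ge> 2"
    and "\<exists>D. \<forall>v. deg adj v \<le> D"
    and "0 < \<theta>" and "\<theta> < 1"
  shows "(\<forall>n\<ge>1. (\<forall>f \<in> Lip adj \<theta>. (Tr adj ^^ n) f \<in> Lip adj \<theta>) \<and>
                 opnorm_on (Lip adj \<theta>) (thnorm adj \<theta>) (Tr adj ^^ n) = real (Rn adj n) \<and>
                 opnorm_on (Lip adj \<theta>) (supnorm adj) (Tr adj ^^ n) = real (Rn adj n)) \<and>
         (\<exists>\<rho>. (\<lambda>n. root n (real (Rn adj n))) \<longlonglongrightarrow> \<rho> \<and>
              spectral_radius_Lip adj \<theta> = \<rho> \<and> \<rho> \<le> real (qmax adj) \<and>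
              (\<forall>\<epsilon>>0. \<exists>N. \<forall>n\<ge>N. \<forall>f \<in> Lip adj \<theta>.
                 thnorm adj \<theta> ((Tr adj ^^ n) f)
                   \<le> (\<rho> + \<epsilon>) ^ n * (\<theta> ^ n * L1 adj \<theta> f + supnorm adj f)))"
proof -
  interpret lip_space adj \<theta>
    using assms by unfold_locales auto
  show ?thesis
    using Tr_pow_in_Lip opnorm_thnorm_Tr_pow opnorm_supnorm_Tr_pow
      root_Rn_tendsto_rho spectral_radius_Lip_eq_rho rho_le_qmax thnorm_Tr_pow_le_eventually
    by blast
qed

end
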